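(* Let $R$ be a partially ordered commutative ring, $m\ge1$, $A=(a_{ij})\in R^{m\times m}$, $b\in R^m$, and let $L\in R^{(m+1)\times(m+1)}$ be the matrix with $L_{ij}=a_{ij}$ for $i,j\le m$, $L_{i,m+1}=b_i$ for $i\le m$, $L_{m+1,j}=-\sum_{k=1}^m a_{kj}$ for $j\le m$, and $L_{m+1,m+1}=-\sum_{k=1}^m b_k$. Assume $\mathcal{G}$ is a P-graph with Laplacian $L$ and associated map $\mu$. Then for $i\in\mathcal{N}=\{1,\dots,m+1\}$, $\Upsilon_\mathcal{G}(i)\neq0$ if and only if there exists a spanning tree $\tau\in\Lambda_\mathcal{G}(\{i\})$ such that $\pi(e)+\sum_{e'\in\mu(e)}\pi(e')\in R_{>0}$ for all $e\in\tau\cap\mathcal{E}^-$. In particular, $\det(A)\neq0$ if and only if this statement holds for $i=m+1$.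
   Context: $\mathcal{G}=(\mathcal{N},\mathcal{E})$ is a multidigraph with source/target maps $s,t$, no self-loops, node set $\{1,\dots,m+1\}$ and labeling $\pi\colon\mathcal{E}\to R$, extended by $\pi(\mathcal{E}')=\prod_{e\in\mathcal{E}'}\pi(e)$. Laplacian: $L_{ij}=\sum_{e:\,s(e)=j,t(e)=i}\pi(e)$ ($i\ne j$), $L_{ii}=-\sum_{k\ne i}L_{ki}$. Trees/forests: subgraphs whose underlying undirected graph is acyclic (connected for trees); a tree is rooted at $N$ if $N$ is its only node without outgoing edge; spanning means node set $\mathcal{N}$, and spanning forests are identified with their edge sets. For $B\subseteq\mathcal{N}$, $\Theta_\mathcal{G}(B)$ is the set of spanning forests with $|B|$ connected components each being a tree rooted at a node of $B$; $\Theta_\mathcal{G}(j)=\Theta_\mathcal{G}(\{j\})$ and $\Upsilon_\mathcal{G}(j)=\sum_{\tau\in\Theta_\mathcal{G}(j)}\pi(\tau)$. A cycle is a closed directed path with no repeated nodes. $\mathcal{E}^-=\{e:\pi(e)\in R_{<0}\}$, $\mathcal{E}^+=\{e:\pi(e)\in R_{>0}\}$. An edge partition $(\mathcal{G},\mu)$, $\mu\colon\mathcal{E}^-\to\mathcal{P}(\mathcal{E}^+)$, satisfies (i) $\mathcal{E}=\mathcal{E}^+\sqcup\mathcal{E}^-$; (ii) every cycle contains at most one edge of $\mathcal{E}^-$; (iii) for $e\in\mathcal{E}^-$: (a) $e'\in\mu(e)\Rightarrow s(e')=s(e)$; (b) $e'\in\mu(e)\Rightarrow$ every cycle containing $e'$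 contains $t(e)$; (c) $\mu(e)\cap\mu(e')=\emptyset$ for $e\neq e'$. $\mathcal{G}$ is a P-graph with associated map $\mu$ if $(\mathcal{G},\mu)$ is an edge partition and (iv) $\pi(e)+\sum_{e'\in\mu(e)}\pi(e')\in R_{\ge0}$ for all $e\in\mathcal{E}^-$. Let $\operatorname{im}\mu=\bigcup_{e\in\mathcal{E}^-}\mu(e)$ and $\mu^*\colon\operatorname{im}\mu\to\mathcal{E}^-$, $\mu^*(e')=e$ if $e'\in\mu(e)$. For $\zeta\in\Theta_\mathcal{G}(B)$ let $\mathcal{E}_\zeta=\{E\subseteq\zeta\cap\operatorname{im}\mu : (\zeta\setminus E)\cup\mu^*(E)\in\Theta_\mathcal{G}(B)\}$, and $\Lambda_\mathcal{G}(B)=\{\zeta\in\Theta_\mathcal{G}(B):\mathcal{E}_\zeta=\{\emptyset\}\}$. *)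

theory Defs
  imports "Jordan_Normal_Form.Determinant"
begin

definition nodes :: "nat \<Rightarrow> nat set" where
  "nodes m = {1..m+1}"

definition multidigraph :: "nat \<Rightarrow> 'e set \<Rightarrow> ('e \<Rightarrow> nat) \<Rightarrow> ('e \<Rightarrow> nat) \<Rightarrow> bool" where
  "multidigraph m E s t \<longleftrightarrow> finite E \<and>
     (\<forall>e\<in>E. s e \<in> nodes m \<and> t e \<in> nodes m \<and> s e \<noteq> t e)"

definition lap_off :: "'e set \<Rightarrow> ('e \<Rightarrow> nat) \<Rightarrow> ('e \<Rightarrow> nat) \<Rightarrow> ('e \<Rightarrow> 'r::comm_ring_1)
    \<Rightarrow> nat \<Rightarrow> nat \<Rightarrow> 'r" where
  "lap_off E s t lab i j = (\<Sum>e\<in>{e\<in>E. s e = j \<and> t e = i}. lab e)"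

definition laplacian :: "nat \<Rightarrow> 'e set \<Rightarrow> ('e \<Rightarrow> nat) \<Rightarrow> ('e \<Rightarrow> nat) \<Rightarrow> ('e \<Rightarrow> 'r::comm_ring_1)
    \<Rightarrow> nat \<Rightarrow> nat \<Rightarrow> 'r" where
  "laplacian m E s t lab i j =
     (if i \<noteq> j then lap_off E s t lab i j
      else - (\<Sum>k\<in>nodes m - {i}. lap_off E s t lab k i))"

definition undirected_cycle :: "'e set \<Rightarrow> ('e \<Rightarrow> nat) \<Rightarrow> ('e \<Rightarrow> nat) \<Rightarrow> 'e list \<Rightarrow> nat list \<Rightarrow> bool" where
  "undirected_cycle F s t es vs \<longleftrightarrow>
     es \<noteq> [] \<and> set es \<subseteq> F \<and> distinct es \<and>
     length vs = length es + 1 \<and> vs ! 0 = vs ! length es \<and> distinct (butlast vs) \<and>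
     (\<forall>i<length es. (s (es!i) = vs!i \<and> t (es!i) = vs!(i+1)) \<or>
                    (t (es!i) = vs!i \<and> s (es!i) = vs!(i+1)))"

definition undirected_acyclic :: "'e set \<Rightarrow> ('e \<Rightarrow> nat) \<Rightarrow> ('e \<Rightarrow> nat) \<Rightarrow> bool" where
  "undirected_acyclic F s t \<longleftrightarrow> (\<nexists>es vs. undirected_cycle F s t es vs)"

definition uconn :: "'e set \<Rightarrow> ('e \<Rightarrow> nat) \<Rightarrow> ('e \<Rightarrow> nat) \<Rightarrow> nat rel" where
  "uconn F s t = ({(s e, t e) | e. e \<in> F} \<union> {(t e, s e) | e. e \<in> F})\<^sup>*"

definition components :: "nat \<Rightarrow> 'e set \<Rightarrow> ('e \<Rightarrow> nat) \<Rightarrow> ('e \<Rightarrow> nat) \<Rightarrow> nat set set" where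
  "components m F s t = {{w \<in> nodes m. (v, w) \<in> uconn F s t} | v. v \<in> nodes m}"

definition rooted_at :: "'e set \<Rightarrow> ('e \<Rightarrow> nat) \<Rightarrow> nat set \<Rightarrow> nat \<Rightarrow> bool" where
  "rooted_at F s C r \<longleftrightarrow> {v \<in> C. \<not> (\<exists>e\<in>F. s e = v)} = {r}"

definition Theta :: "nat \<Rightarrow> 'e set \<Rightarrow> ('e \<Rightarrow> nat) \<Rightarrow> ('e \<Rightarrow> nat) \<Rightarrow> nat set \<Rightarrow> 'e set set" where
  "Theta m E s t B = {F. F \<subseteq> E \<and> undirected_acyclic F s t \<and>
      card (components m F s t) = card B \<and>
      (\<forall>C\<in>components m F s t. \<exists>r\<in>B. r \<in> C \<and> rooted_at F s C r)}"

definition Upsilon :: "nat \<Rightarrow> 'e set \<Rightarrow> ('e \<Rightarrow> nat) \<Rightarrow> ('e \<Rightarrow> nat) \<Rightarrow> ('e \<Rightarrow> 'r::comm_ring_1)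
    \<Rightarrow> nat \<Rightarrow> 'r" where
  "Upsilon m E s t lab j = (\<Sum>\<tau>\<in>Theta m E s t {j}. \<Prod>e\<in>\<tau>. lab e)"

definition dcycle :: "'e set \<Rightarrow> ('e \<Rightarrow> nat) \<Rightarrow> ('e \<Rightarrow> nat) \<Rightarrow> 'e list \<Rightarrow> bool" where
  "dcycle E s t es \<longleftrightarrow> es \<noteq> [] \<and> set es \<subseteq> E \<and> distinct (map s es) \<and>
     (\<forall>i<length es. t (es!i) = s (es!((i+1) mod length es)))"

definition Eminus :: "'e set \<Rightarrow> ('e \<Rightarrow> 'r::{comm_ring_1,ordered_comm_semiring_strict}) \<Rightarrow> 'e set" where
  "Eminus E lab = {e\<in>E. lab e < 0}"

definition Eplus :: "'e set \<Rightarrow> ('e \<Rightarrow> 'r::{comm_ring_1,ordered_comm_semiring_strict}) \<Rightarrow> 'e set" where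
  "Eplus E lab = {e\<in>E. lab e > 0}"

definition edge_partition :: "'e set \<Rightarrow> ('e \<Rightarrow> nat) \<Rightarrow> ('e \<Rightarrow> nat)
    \<Rightarrow> ('e \<Rightarrow> 'r::{comm_ring_1,ordered_comm_semiring_strict}) \<Rightarrow> ('e \<Rightarrow> 'e set) \<Rightarrow> bool" where
  "edge_partition E s t lab mu \<longleftrightarrow>
     (\<forall>e\<in>Eminus E lab. mu e \<subseteq> Eplus E lab) \<and>
     E = Eplus E lab \<union> Eminus E lab \<and> Eplus E lab \<inter> Eminus E lab = {} \<and>
     (\<forall>es. dcycle E s t es \<longrightarrow> card (set es \<inter> Eminus E lab) \<le> 1) \<and>
     (\<forall>e\<in>Eminus E lab.
        (\<forall>e'\<in>mu e. s e' = s e) \<and>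
        (\<forall>e'\<in>mu e. \<forall>es. dcycle E s t es \<and> e' \<in> set es \<longrightarrow> t e \<in> set (map s es)) \<and>
        (\<forall>e2\<in>Eminus E lab. e2 \<noteq> e \<longrightarrow> mu e \<inter> mu e2 = {}))"

definition P_graph :: "'e set \<Rightarrow> ('e \<Rightarrow> nat) \<Rightarrow> ('e \<Rightarrow> nat)
    \<Rightarrow> ('e \<Rightarrow> 'r::{comm_ring_1,ordered_comm_semiring_strict}) \<Rightarrow> ('e \<Rightarrow> 'e set) \<Rightarrow> bool" where
  "P_graph E s t lab mu \<longleftrightarrow> edge_partition E s t lab mu \<and>
     (\<forall>e\<in>Eminus E lab. 0 \<le> lab e + (\<Sum>e'\<in>mu e. lab e'))"

definition im_mu :: "'e set \<Rightarrow> ('e \<Rightarrow> 'r::{comm_ring_1,ordered_comm_semiring_strict}) \<Rightarrow> ('e \<Rightarrow> 'e set) \<Rightarrow> 'e set" where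
  "im_mu E lab mu = (\<Union>e\<in>Eminus E lab. mu e)"

definition mu_star :: "'e set \<Rightarrow> ('e \<Rightarrow> 'r::{comm_ring_1,ordered_comm_semiring_strict}) \<Rightarrow> ('e \<Rightarrow> 'e set) \<Rightarrow> 'e \<Rightarrow> 'e" where
  "mu_star E lab mu e' = (THE e. e \<in> Eminus E lab \<and> e' \<in> mu e)"

definition Ezeta :: "nat \<Rightarrow> 'e set \<Rightarrow> ('e \<Rightarrow> nat) \<Rightarrow> ('e \<Rightarrow> nat)
    \<Rightarrow> ('e \<Rightarrow> 'r::{comm_ring_1,ordered_comm_semiring_strict}) \<Rightarrow> ('e \<Rightarrow> 'e set) \<Rightarrow> nat set \<Rightarrow> 'e set \<Rightarrow> 'e set set" where
  "Ezeta m E s t lab mu B \<zeta> = {X. X \<subseteq> \<zeta> \<inter> im_mu E lab mu \<and>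
      (\<zeta> - X) \<union> mu_star E lab mu ` X \<in> Theta m E s t B}"

definition Lambda :: "nat \<Rightarrow> 'e set \<Rightarrow> ('e \<Rightarrow> nat) \<Rightarrow> ('e \<Rightarrow> nat)
    \<Rightarrow> ('e \<Rightarrow> 'r::{comm_ring_1,ordered_comm_semiring_strict}) \<Rightarrow> ('e \<Rightarrow> 'e set) \<Rightarrow> nat set \<Rightarrow> 'e set set" where
  "Lambda m E s t lab mu B = {\<zeta> \<in> Theta m E s t B. Ezeta m E s t lab mu B \<zeta> = {{}}}"

text \<open>The bordered (m+1)x(m+1) matrix built from A and b (0-based indices; node i
  of the graph corresponds to row/column i-1).\<close>

definition bordered :: "nat \<Rightarrow> 'r::comm_ring_1 mat \<Rightarrow> 'r vec \<Rightarrow> 'r mat" where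
  "bordered m A b = mat (m+1) (m+1) (\<lambda>(i,j).
     if i < m \<and> j < m then A $$ (i,j)
     else if i < m \<and> j = m then b $ i
     else if i = m \<and> j < m then - (\<Sum>k<m. A $$ (k,j))
     else - (\<Sum>k<m. b $ k))"

end

(* Upsilon(i) is a sum over the spanning trees rooted at i, handled here as arborescences: each
   node other than i has exactly one out-edge, and following out-edges always leads to i.  In a
   P-graph, replacing a negative edge e of such a tree by an edge of mu(e), which leaves the same
   node, again gives a tree; conversely, since a directed cycle contains at most one negative edge,
   every tree arises in exactly one way by such replacements from a tree in Lambda(i).  Grouping
   the terms accordingly gives Upsilon(i) as the sum over Lambda(i) of the products of the weights
   pi(e) + sum of pi over mu(e) (for negative e) and pi(e) (otherwise), which are nonnegative, and
   positive off E^-.  Hence Upsilon(i) is nonzero iff some tree of Lambda(i) has only positive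
   weights.  For the determinant, expanding det A column by column (column j collects the edges
   leaving node j + 1) gives det A = (-1)^m Upsilon(m + 1): a choice of one out-edge for every node
   other than m + 1 contributes (-1)^m times its label product if it is an arborescence rooted at
   m + 1, and 0 otherwise, because the columns of the edges of a directed cycle sum to zero. *)

theory Submission
  imports Defs
begin

lemma prod_pos_nonempty:
  fixes f :: "'a \<Rightarrow> 'r::{comm_semiring_1,ordered_comm_semiring_strict}"
  assumes "finite A" "A \<noteq> {}" "\<And>a. a \<in> A \<Longrightarrow> 0 < f a"
  shows "0 < prod f A"
  using assms by (induction A rule: finite_ne_induct) (simp_all add: mult_pos_pos)

lemma prod_nonneg_nonempty:
  fixes f :: "'a \<Rightarrow> 'r::{comm_semiring_1,ordered_comm_semiring_strict}"
  assumes "finite A" "A \<noteq> {}" "\<And>a. a \<in> A \<Longrightarrow> 0 \<le> f a"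
  shows "0 \<le> prod f A"
  using assms by (induction A rule: finite_ne_induct) (simp_all add: mult_nonneg_nonneg)

lemma sum_nonneg_neq_0_iff:
  fixes f :: "'a \<Rightarrow> 'b::ordered_comm_monoid_add"
  assumes "finite A" "\<And>a. a \<in> A \<Longrightarrow> 0 \<le> f a"
  shows "sum f A \<noteq> 0 \<longleftrightarrow> (\<exists>a\<in>A. 0 < f a)"
proof
  assume "sum f A \<noteq> 0"
  then obtain a where "a \<in> A" "f a \<noteq> 0" using sum.not_neutral_contains_not_neutral by metis
  then show "\<exists>a\<in>A. 0 < f a" using assms(2) order.not_eq_order_implies_strict by metis
next
  assume "\<exists>a\<in>A. 0 < f a"
  then obtain a where a: "a \<in> A" "0 < f a" by blast
  have "0 \<le> sum f (A - {a})" using assms(2) by (intro sum_nonneg) auto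
  with a(2) have "0 < f a + sum f (A - {a})" by (rule add_pos_nonneg)
  then show "sum f A \<noteq> 0" using sum.remove[OF assms(1) a(1), of f] by simp
qed

lemma sum_list_map_rotate1:
  fixes g :: "'a \<Rightarrow> 'b::comm_monoid_add"
  shows "sum_list (map g (rotate1 xs)) = sum_list (map g xs)"
  by (cases xs) (simp_all add: add.commute)

lemma finite_orbit_periodic_point:
  assumes "finite S" "x \<in> S" "\<And>y. y \<in> S \<Longrightarrow> f y \<in> S"
  obtains y p where "y \<in> S" "0 < p" "(f ^^ p) y = y" "\<And>k. 0 < k \<Longrightarrow> k < p \<Longrightarrow> (f ^^ k) y \<noteq> y"
proof -
  have orbit: "(f ^^ k) x \<in> S" for k
    by (induction k) (use assms in auto)
  have "\<not> inj (\<lambda>k. (f ^^ k) x)"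
  proof
    assume "inj (\<lambda>k. (f ^^ k) x)"
    then have "infinite (range (\<lambda>k. (f ^^ k) x))" by (rule range_inj_infinite)
    moreover have "range (\<lambda>k. (f ^^ k) x) \<subseteq> S" using orbit by auto
    ultimately show False using assms(1) finite_subset by blast
  qed
  then obtain i0 j0 where "i0 \<noteq> j0" "(f ^^ i0) x = (f ^^ j0) x"
    unfolding inj_def by blast
  then obtain i j where ij: "i < j" "(f ^^ i) x = (f ^^ j) x"
    by (cases "i0 < j0") (auto intro: that simp: nat_neq_iff)
  have "(f ^^ (j - i)) ((f ^^ i) x) = (f ^^ (j - i + i)) x"
    by (simp add: funpow_add)
  also have "\<dots> = (f ^^ i) x" using ij by (simp add: less_imp_le)
  finally have period: "(f ^^ (j - i)) ((f ^^ i) x) = (f ^^ i) x" .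
  define p where "p = (LEAST p. 0 < p \<and> (f ^^ p) ((f ^^ i) x) = (f ^^ i) x)"
  have p: "0 < p" "(f ^^ p) ((f ^^ i) x) = (f ^^ i) x"
    unfolding p_def
    using LeastI[of "\<lambda>p. 0 < p \<and> (f ^^ p) ((f ^^ i) x) = (f ^^ i) x" "j - i"] period ij
    by auto
  have p_min: "(f ^^ k) ((f ^^ i) x) \<noteq> (f ^^ i) x" if "0 < k" "k < p" for k
    using not_less_Least[of k] that unfolding p_def by blast
  show ?thesis by (rule that[OF orbit[of i] p p_min])
qed

lemma funpow_minimal_period_distinct:
  assumes "(f ^^ p) x = x" "\<And>k. 0 < k \<Longrightarrow> k < p \<Longrightarrow> (f ^^ k) x \<noteq> x" "a < b" "b < p"
  shows "(f ^^ a) x \<noteq> (f ^^ b) x"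
proof
  assume eq: "(f ^^ a) x = (f ^^ b) x"
  have "(f ^^ (p - b + a)) x = (f ^^ (p - b)) ((f ^^ a) x)"
    by (simp only: funpow_add comp_apply)
  also have "\<dots> = (f ^^ (p - b + b)) x"
    unfolding eq by (simp only: funpow_add comp_apply)
  also have "p - b + b = p" using assms(4) by simp
  finally have "(f ^^ (p - b + a)) x = x" using assms(1) by simp
  moreover have "0 < p - b + a" "p - b + a < p" using assms(3,4) by simp_all
  ultimately show False using assms(2)[of "p - b + a"] by simp
qed

lemma mod_add_neq_self:
  fixes i k n :: nat
  assumes "i < n" "0 < k" "k < n"
  shows "(i + k) mod n \<noteq> i"
proof (cases "i + k < n")
  case True
  then show ?thesis using assms(2) by simp
next
  case False
  then have "(i + k) mod n = i + k - n" using assms by (simp add: le_mod_geq)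
  then show ?thesis using assms(3) False by simp
qed

lemma neg_one_power_mult_eq_0_iff: "(-1) ^ n * x = (0::'a::comm_ring_1) \<longleftrightarrow> x = 0"
proof
  assume "(-1) ^ n * x = 0"
  then have "(-1) ^ n * ((-1) ^ n * x) = 0" by simp
  then have "((-1) ^ n * (-1) ^ n) * x = 0" by (simp only: mult.assoc)
  then show "x = 0" by (simp flip: power_mult_distrib)
qed simp

lemma det_sum_columns:
  fixes A :: "'a::comm_ring_1 mat" and w :: "'e \<Rightarrow> 'a" and M :: "'e \<Rightarrow> nat \<Rightarrow> nat \<Rightarrow> 'a"
  assumes A: "A \<in> carrier_mat n n" and fin: "\<And>j. j < n \<Longrightarrow> finite (S j)"
    and col: "\<And>i j. i < n \<Longrightarrow> j < n \<Longrightarrow> A $$ (i, j) = (\<Sum>e\<in>S j. w e * M e i j)"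
  shows "det A = (\<Sum>f\<in>PiE {..<n} S. (\<Prod>j<n. w (f j)) * det (mat n n (\<lambda>(i, j). M (f j) i j)))"
proof -
  let ?P = "{p. p permutes {0..<n}}"
  let ?Mf = "\<lambda>f. mat n n (\<lambda>(i, j). M (f j) i j) :: 'a mat"
  have p_lt: "p j < n" if "p permutes {0..<n}" "j < n" for p j
    using permutes_in_image[OF that(1), of j] that(2) by auto
  have det_Mf: "det (?Mf f) = (\<Sum>p\<in>?P. signof p * (\<Prod>j<n. M (f j) (p j) j))" for f
  proof -
    have "det (?Mf f) = (\<Sum>p\<in>?P. signof p * (\<Prod>j<n. ?Mf f $$ (p j, j)))"
      by (rule det_col) simp
    also have "\<dots> = (\<Sum>p\<in>?P. signof p * (\<Prod>j<n. M (f j) (p j) j))"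
      using p_lt by (intro sum.cong refl arg_cong2[where f="(*)"] prod.cong) auto
    finally show ?thesis .
  qed
  have "det A = (\<Sum>p\<in>?P. signof p * (\<Prod>j<n. A $$ (p j, j)))" by (rule det_col[OF A])
  also have "\<dots> = (\<Sum>p\<in>?P. signof p *
      (\<Sum>f\<in>PiE {..<n} S. (\<Prod>j<n. w (f j)) * (\<Prod>j<n. M (f j) (p j) j)))"
  proof (rule sum.cong[OF refl])
    fix p assume p: "p \<in> ?P"
    have "(\<Prod>j<n. A $$ (p j, j)) = (\<Prod>j<n. \<Sum>e\<in>S j. w e * M e (p j) j)"
      using col p_lt p by (intro prod.cong) auto
    also have "\<dots> = (\<Sum>f\<in>PiE {..<n} S. \<Prod>j<n. w (f j) * M (f j) (p j) j)"
      by (rule prod_sum_PiE) (use fin in auto)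
    also have "\<dots> = (\<Sum>f\<in>PiE {..<n} S. (\<Prod>j<n. w (f j)) * (\<Prod>j<n. M (f j) (p j) j))"
      by (simp add: prod.distrib)
    finally show "signof p * (\<Prod>j<n. A $$ (p j, j)) = signof p *
        (\<Sum>f\<in>PiE {..<n} S. (\<Prod>j<n. w (f j)) * (\<Prod>j<n. M (f j) (p j) j))"
      by simp
  qed
  also have "\<dots> = (\<Sum>f\<in>PiE {..<n} S. \<Sum>p\<in>?P. (\<Prod>j<n. w (f j)) * (signof p * (\<Prod>j<n. M (f j) (p j) j)))"
    by (subst sum.swap) (simp add: sum_distrib_left mult.left_commute)
  also have "\<dots> = (\<Sum>f\<in>PiE {..<n} S. (\<Prod>j<n. w (f j)) * det (?Mf f))"
    unfolding det_Mf by (simp add: sum_distrib_left)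
  finally show ?thesis .
qed

lemma det_zero_if_kernel_vector:
  fixes A :: "'a::comm_ring_1 mat"
  assumes A: "A \<in> carrier_mat n n" and v: "v \<in> carrier_vec n" "A *\<^sub>v v = 0\<^sub>v n"
    and x: "x < n" "v $ x = 1"
  shows "det A = 0"
proof -
  have adj: "adj_mat A \<in> carrier_mat n n" "adj_mat A * A = det A \<cdot>\<^sub>m 1\<^sub>m n"
    using adj_mat[OF A] by auto
  have "det A = ((det A \<cdot>\<^sub>m 1\<^sub>m n) *\<^sub>v v) $ x" using x v by simp
  also have "\<dots> = (adj_mat A *\<^sub>v (A *\<^sub>v v)) $ x"
    unfolding adj(2)[symmetric] using assoc_mult_mat_vec[OF adj(1) A v(1)] by simp
  also have "\<dots> = 0" unfolding v(2) using adj(1) x by simp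
  finally show ?thesis .
qed

section \<open>Directed cycles and undirected connectivity\<close>

lemma dcycle_target_in_sources:
  assumes "dcycle E s t C" "e \<in> set C"
  shows "t e \<in> s ` set C"
proof -
  obtain i where i: "i < length C" "e = C ! i" using assms(2) by (auto simp: in_set_conv_nth)
  then have "t e = s (C ! ((i + 1) mod length C))" using assms(1) unfolding dcycle_def by auto
  moreover have "(i + 1) mod length C < length C"
    using le_less_trans[OF zero_le i(1)] by (rule mod_less_divisor)
  then have "C ! ((i + 1) mod length C) \<in> set C" by (rule nth_mem)
  ultimately show ?thesis by blast
qed

lemma dcycle_sum_target_source:
  assumes "dcycle E s t C"
  shows "(\<Sum>e\<in>set C. g (t e)) = (\<Sum>e\<in>set C. g (s e))"
proof -
  have C: "C \<noteq> []" "distinct C" using assms unfolding dcycle_def by (auto simp: distinct_map)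
  have "map t C = rotate1 (map s C)"
    using assms unfolding dcycle_def by (intro nth_equalityI) (simp_all add: nth_rotate1)
  have "(\<Sum>e\<in>set C. g (t e)) = sum_list (map g (map t C))"
    using C by (simp add: sum.distinct_set_conv_list comp_def)
  also have "\<dots> = sum_list (map g (map s C))"
    unfolding \<open>map t C = rotate1 (map s C)\<close> by (rule sum_list_map_rotate1)
  also have "\<dots> = (\<Sum>e\<in>set C. g (s e))"
    using C by (simp add: sum.distinct_set_conv_list comp_def)
  finally show ?thesis .
qed

definition joins :: "('e \<Rightarrow> 'v) \<Rightarrow> ('e \<Rightarrow> 'v) \<Rightarrow> 'e \<Rightarrow> 'v \<Rightarrow> 'v \<Rightarrow> bool" where
  "joins s t e x y \<longleftrightarrow> (s e = x \<and> t e = y) \<or> (t e = x \<and> s e = y)"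

definition upath :: "('e \<Rightarrow> nat) \<Rightarrow> ('e \<Rightarrow> nat) \<Rightarrow> 'e set \<Rightarrow> 'e list \<Rightarrow> nat list \<Rightarrow> bool" where
  "upath s t F es vs \<longleftrightarrow> length vs = Suc (length es) \<and> set es \<subseteq> F \<and> distinct vs \<and>
     (\<forall>i<length es. joins s t (es ! i) (vs ! i) (vs ! Suc i))"

lemma uconn_edge:
  assumes "e \<in> F" "joins s t e a b"
  shows "(a, b) \<in> uconn F s t"
proof -
  have "(a, b) \<in> {(s e, t e) |e. e \<in> F} \<union> {(t e, s e) |e. e \<in> F}"
    using assms unfolding joins_def by auto
  then show ?thesis unfolding uconn_def by (rule r_into_rtrancl)
qed

lemma uconn_trans: "(a, b) \<in> uconn F s t \<Longrightarrow> (b, c) \<in> uconn F s t \<Longrightarrow> (a, c) \<in> uconn F s t"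
  unfolding uconn_def by (rule rtrancl_trans)

lemma uconn_sym:
  assumes "(a, b) \<in> uconn F s t"
  shows "(b, a) \<in> uconn F s t"
proof -
  let ?R = "{(s e, t e) |e. e \<in> F} \<union> {(t e, s e) |e. e \<in> F}"
  have "?R\<inverse> = ?R" by auto
  then show ?thesis using assms unfolding uconn_def using rtrancl_converseI[of a b ?R] by simp
qed

lemma uconn_upath:
  assumes "(a, b) \<in> uconn F s t"
  obtains es vs where "upath s t F es vs" "vs ! 0 = a" "last vs = b"
  using assms unfolding uconn_def
proof (induction arbitrary: thesis rule: rtrancl_induct)
  case base
  show ?case by (rule base[of "[]" "[a]"]) (auto simp: upath_def)
next
  case (step b c)
  obtain es vs where p: "upath s t F es vs" "vs ! 0 = a" "last vs = b" using step.IH by blast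
  obtain e where e: "e \<in> F" "joins s t e b c" using step.hyps(2) unfolding joins_def by blast
  have len: "length vs = Suc (length es)" using p unfolding upath_def by auto
  show ?case
  proof (cases "c \<in> set vs")
    case True
    then obtain i where i: "i < length vs" "vs ! i = c" by (auto simp: in_set_conv_nth)
    have "upath s t F (take i es) (take (Suc i) vs)"
      using p(1) i len unfolding upath_def by (auto dest: in_set_takeD)
    moreover have "take (Suc i) vs ! 0 = a" using p(2) by simp
    moreover have "last (take (Suc i) vs) = c" using i by (simp add: take_Suc_conv_app_nth)
    ultimately show ?thesis by (rule step.prems)
  next
    case False
    have "vs \<noteq> []" using len by auto
    then have "vs ! length es = b" using p(3) len by (simp add: last_conv_nth)
    then have "upath s t F (es @ [e]) (vs @ [c])"
      using p(1) False e len unfolding upath_def by (auto simp: nth_append less_Suc_eq)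
    moreover have "(vs @ [c]) ! 0 = a" using p(2) \<open>vs \<noteq> []\<close> by (simp add: nth_append)
    ultimately show ?thesis using step.prems by simp
  qed
qed

lemma upath_distinct_edges:
  assumes "upath s t F es vs"
  shows "distinct es"
  unfolding distinct_conv_nth
proof (intro allI impI notI)
  fix i j assume ij: "i < length es" "j < length es" "i \<noteq> j" and eq: "es ! i = es ! j"
  have d: "distinct vs" and len: "length vs = Suc (length es)"
    and ji: "joins s t (es ! i) (vs ! i) (vs ! Suc i)" and jj: "joins s t (es ! j) (vs ! j) (vs ! Suc j)"
    using assms ij unfolding upath_def by auto
  have D1: "vs ! i = vs ! j \<or> vs ! i = vs ! Suc j" and D2: "vs ! Suc i = vs ! j \<or> vs ! Suc i = vs ! Suc j"
    using ji jj eq unfolding joins_def by auto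
  have I: "a = b" if "a < length vs" "b < length vs" "vs ! a = vs ! b" for a b
    using d that nth_eq_iff_index_eq by blast
  have "i = j \<or> i = Suc j" using D1 I[of i j] I[of i "Suc j"] ij len by auto
  moreover have "Suc i = j \<or> i = j" using D2 I[of "Suc i" j] I[of "Suc i" "Suc j"] ij len by auto
  ultimately show False using ij by auto
qed

lemma acyclic_remove_edge_disconnects:
  assumes acyclic: "undirected_acyclic F s t" and e: "e \<in> F"
  shows "(t e, s e) \<notin> uconn (F - {e}) s t"
proof
  assume "(t e, s e) \<in> uconn (F - {e}) s t"
  then obtain es vs where p: "upath s t (F - {e}) es vs" "vs ! 0 = t e" "last vs = s e"
    by (rule uconn_upath)
  have len: "length vs = Suc (length es)" and "distinct vs" and es: "set es \<subseteq> F - {e}"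
    and joins: "\<forall>i<length es. joins s t (es ! i) (vs ! i) (vs ! Suc i)"
    using p(1) unfolding upath_def by auto
  have "vs \<noteq> []" using len by auto
  then have last: "vs ! length es = s e" using p(3) len by (simp add: last_conv_nth)
  have "distinct (butlast vs @ [last vs])" using \<open>distinct vs\<close> \<open>vs \<noteq> []\<close> by simp
  then have "s e \<notin> set (butlast vs)" "distinct (butlast vs)" using p(3) by auto
  then have "undirected_cycle F s t (e # es) (s e # vs)"
    unfolding undirected_cycle_def
    using e es upath_distinct_edges[OF p(1)] len last joins p(2) \<open>vs \<noteq> []\<close>
    by (auto simp: joins_def less_Suc_eq_0_disj)
  then show False using acyclic unfolding undirected_acyclic_def by blast
qed

lemma undirected_cycle_vertices:
  assumes cyc: "undirected_cycle F s t es vs" and inj: "inj_on s (set es)"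
  shows "s ` set es = set (butlast vs)" "t ` set es \<subseteq> set (butlast vs)"
proof -
  let ?k = "length es"
  let ?V = "set (butlast vs)"
  have es: "es \<noteq> []" "distinct es" and len: "length vs = ?k + 1"
    and closed: "vs ! 0 = vs ! ?k" and dist: "distinct (butlast vs)"
    and joins: "\<forall>i<?k. (s (es!i) = vs!i \<and> t (es!i) = vs!(i+1)) \<or> (t (es!i) = vs!i \<and> s (es!i) = vs!(i+1))"
    using cyc unfolding undirected_cycle_def by auto
  have in_V: "vs ! i \<in> ?V" if "i \<le> ?k" for i
  proof (cases "i = ?k")
    case True
    have "vs ! 0 \<in> ?V" using es len by (simp add: nth_butlast[symmetric])
    then show ?thesis using True closed by simp
  next
    case False
    then have "i < length (butlast vs)" using that len by simp
    then show ?thesis using nth_butlast[of i vs] by (metis nth_mem)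
  qed
  have ends: "s (es ! i) \<in> ?V \<and> t (es ! i) \<in> ?V" if "i < ?k" for i
    using joins that in_V by (metis Suc_eq_plus1 less_imp_le_nat Suc_leI)
  then show "t ` set es \<subseteq> ?V" by (auto simp: in_set_conv_nth)
  text \<open>The sources of the cycle edges are pairwise distinct, so they exhaust its vertices.\<close>
  have "card (s ` set es) = ?k" using es inj by (simp add: card_image distinct_card)
  moreover have "card ?V = ?k" using dist len by (simp add: distinct_card)
  moreover have "s ` set es \<subseteq> ?V" using ends by (auto simp: in_set_conv_nth)
  ultimately show "s ` set es = ?V" by (metis card_subset_eq finite_set)
qed

lemma uconn_mono: "F \<subseteq> F' \<Longrightarrow> uconn F s t \<subseteq> uconn F' s t"
  unfolding uconn_def by (rule rtrancl_mono) blast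

lemma dcycle_remove_edge_connected:
  assumes C: "dcycle E s t C" and e: "e \<in> set C"
  shows "(t e, s e) \<in> uconn (set C - {e}) s t"
proof -
  let ?n = "length C"
  obtain i where i: "i < ?n" "e = C ! i" using e by (auto simp: in_set_conv_nth)
  have distinct: "distinct C" using C unfolding dcycle_def by (simp add: distinct_map)
  have next_edge: "t (C ! j) = s (C ! (Suc j mod ?n))" if "j < ?n" for j
    using C that unfolding dcycle_def by simp
  have "(t e, s (C ! ((i + k) mod ?n))) \<in> uconn (set C - {e}) s t" if "1 \<le> k" "k \<le> ?n" for k
    using that
  proof (induction k)
    case 0
    then show ?case by simp
  next
    case (Suc k)
    show ?case
    proof (cases "k = 0")
      case True
      then show ?thesis using next_edge[OF i(1)] i(2) unfolding uconn_def by simp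
    next
      case False
      let ?j = "(i + k) mod ?n"
      have j: "?j < ?n" using le_less_trans[OF zero_le i(1)] by (rule mod_less_divisor)
      have "?j \<noteq> i" using mod_add_neq_self[OF i(1)] False Suc.prems by simp
      then have "C ! ?j \<in> set C - {e}" using distinct i j by (simp add: nth_eq_iff_index_eq)
      moreover have "joins s t (C ! ?j) (s (C ! ?j)) (s (C ! ((i + Suc k) mod ?n)))"
        using next_edge[OF j] unfolding joins_def by (simp add: mod_Suc_eq)
      ultimately have "(s (C ! ?j), s (C ! ((i + Suc k) mod ?n))) \<in> uconn (set C - {e}) s t"
        by (rule uconn_edge)
      moreover have "(t e, s (C ! ?j)) \<in> uconn (set C - {e}) s t" using Suc False by simp
      ultimately show ?thesis using uconn_trans by blast
    qed
  qed
  from this[of ?n] show ?thesis using i by simp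
qed

section \<open>Spanning trees as arborescences\<close>

lemma finite_nodes: "finite (nodes m)"
  unfolding nodes_def by simp

locale finite_multidigraph =
  fixes m :: nat and E :: "'e set" and s t :: "'e \<Rightarrow> nat"
  assumes multidigraph: "multidigraph m E s t"
begin

lemma finite_edges: "finite E"
  using multidigraph unfolding multidigraph_def by auto

lemma source_in_nodes: "e \<in> E \<Longrightarrow> s e \<in> nodes m"
  using multidigraph unfolding multidigraph_def by auto

lemma target_in_nodes: "e \<in> E \<Longrightarrow> t e \<in> nodes m"
  using multidigraph unfolding multidigraph_def by auto

lemma source_neq_target: "e \<in> E \<Longrightarrow> s e \<noteq> t e"
  using multidigraph unfolding multidigraph_def by auto

text \<open>Spanning trees rooted at \<open>r\<close> are handled through their out-edges; \<open>out_edge F v\<close>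
  is unspecified when \<open>v\<close> has no out-edge in \<open>F\<close>, in particular at the root.\<close>

definition out_cover :: "nat \<Rightarrow> 'e set \<Rightarrow> bool" where
  "out_cover r F \<longleftrightarrow> F \<subseteq> E \<and> (\<forall>v\<in>nodes m. v \<noteq> r \<longrightarrow> (\<exists>e\<in>F. s e = v)) \<and> (\<forall>e\<in>F. s e \<noteq> r)"

definition out_function :: "nat \<Rightarrow> 'e set \<Rightarrow> bool" where
  "out_function r F \<longleftrightarrow> out_cover r F \<and> inj_on s F"

definition out_edge :: "'e set \<Rightarrow> nat \<Rightarrow> 'e" where
  "out_edge F v = (SOME e. e \<in> F \<and> s e = v)"

definition successor :: "'e set \<Rightarrow> nat \<Rightarrow> nat" where
  "successor F v = t (out_edge F v)"

definition leads_to_root :: "nat \<Rightarrow> 'e set \<Rightarrow> bool" where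
  "leads_to_root r F \<longleftrightarrow> (\<forall>v\<in>nodes m. \<exists>k. (successor F ^^ k) v = r)"

definition arborescence :: "nat \<Rightarrow> 'e set \<Rightarrow> bool" where
  "arborescence r F \<longleftrightarrow> out_function r F \<and> leads_to_root r F"

lemma out_cover_subset: "out_cover r F \<Longrightarrow> F \<subseteq> E"
  unfolding out_cover_def by auto

lemma out_cover_root: "out_cover r F \<Longrightarrow> e \<in> F \<Longrightarrow> s e \<noteq> r"
  unfolding out_cover_def by auto

lemma arborescence_finite: "arborescence r F \<Longrightarrow> finite F"
  unfolding arborescence_def out_function_def out_cover_def using finite_edges finite_subset by blast

lemma finite_arborescences: "finite {F. arborescence r F}"
proof -
  have "{F. arborescence r F} \<subseteq> Pow E"
    unfolding arborescence_def out_function_def out_cover_def by auto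
  then show ?thesis using finite_edges finite_subset by blast
qed

lemma out_edge:
  assumes "out_cover r F" "v \<in> nodes m" "v \<noteq> r"
  shows "out_edge F v \<in> F" "s (out_edge F v) = v"
proof -
  obtain e where "e \<in> F" "s e = v" using assms unfolding out_cover_def by auto
  then have "out_edge F v \<in> F \<and> s (out_edge F v) = v"
    unfolding out_edge_def by (rule someI[of "\<lambda>e. e \<in> F \<and> s e = v", OF conjI])
  then show "out_edge F v \<in> F" "s (out_edge F v) = v" by auto
qed

lemma out_edge_source:
  assumes "out_function r F" "e \<in> F"
  shows "out_edge F (s e) = e"
proof -
  have cover: "out_cover r F" and inj: "inj_on s F" using assms(1) unfolding out_function_def by auto
  have "s e \<in> nodes m" "s e \<noteq> r"
    using assms(2) cover source_in_nodes out_cover_subset out_cover_root by auto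
  then show ?thesis using out_edge[OF cover] inj assms(2) by (metis inj_on_eq_iff)
qed

lemma successor_source: "out_function r F \<Longrightarrow> e \<in> F \<Longrightarrow> successor F (s e) = t e"
  unfolding successor_def using out_edge_source by auto

lemma successor_in_nodes:
  assumes "out_cover r F" "v \<in> nodes m" "v \<noteq> r"
  shows "successor F v \<in> nodes m"
  using out_edge[OF assms] out_cover_subset[OF assms(1)] target_in_nodes unfolding successor_def by auto

lemma closed_set_not_leads_to_root:
  assumes "S \<subseteq> nodes m" "x \<in> S" "r \<notin> S" "\<And>v. v \<in> S \<Longrightarrow> successor F v \<in> S"
  shows "\<not> leads_to_root r F"
proof
  assume "leads_to_root r F"
  then obtain k where k: "(successor F ^^ k) x = r" using assms(1,2) unfolding leads_to_root_def by blast
  have "(successor F ^^ j) x \<in> S" for j by (induction j) (use assms in auto)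
  then show False using k assms(3) by metis
qed

lemma dcycle_not_leads_to_root:
  assumes F: "out_function r F" and C: "dcycle E s t C" "set C \<subseteq> F"
  shows "\<not> leads_to_root r F"
proof (rule closed_set_not_leads_to_root)
  have cover: "out_cover r F" using F unfolding out_function_def by auto
  show "s ` set C \<subseteq> nodes m" using C out_cover_subset[OF cover] source_in_nodes by auto
  show "s (hd C) \<in> s ` set C" using C unfolding dcycle_def by auto
  show "r \<notin> s ` set C" using C out_cover_root[OF cover] by auto
  show "successor F v \<in> s ` set C" if v: "v \<in> s ` set C" for v
  proof -
    obtain e where "e \<in> set C" "v = s e" using v by auto
    then show ?thesis using successor_source[OF F] C(2) dcycle_target_in_sources[OF C(1)] by auto
  qed
qed

lemma successor_periodic_orbit:
  assumes cover: "out_cover r F" and v: "v \<in> nodes m" "\<forall>k. (successor F ^^ k) v \<noteq> r"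
  shows "\<exists>p x. 0 < p \<and> (successor F ^^ p) x = x \<and>
    (\<forall>k. 0 < k \<longrightarrow> k < p \<longrightarrow> (successor F ^^ k) x \<noteq> x) \<and>
    (\<forall>k. (successor F ^^ k) x \<in> nodes m - {r})"
proof -
  let ?f = "successor F"
  let ?S = "range (\<lambda>k. (?f ^^ k) v)"
  have "(?f ^^ k) v \<in> nodes m - {r}" for k
  proof (induction k)
    case 0
    show ?case using v(1) v(2)[rule_format, of 0] by simp
  next
    case (Suc k)
    then have "?f ((?f ^^ k) v) \<in> nodes m" using successor_in_nodes[OF cover] by blast
    moreover have "(?f ^^ Suc k) v \<noteq> r" using v(2) by blast
    ultimately show ?case by simp
  qed
  then have S: "?S \<subseteq> nodes m - {r}" by auto
  have fin: "finite ?S" using S finite_nodes finite_subset by (metis finite_Diff)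
  have v_in: "v \<in> ?S" by (rule range_eqI[where x=0]) simp
  have closed: "?f y \<in> ?S" if y: "y \<in> ?S" for y
  proof -
    obtain k where "y = (?f ^^ k) v" using y by auto
    then have "?f y = (?f ^^ Suc k) v" by simp
    then show ?thesis by blast
  qed
  obtain x p where x: "x \<in> ?S" "0 < p" "(?f ^^ p) x = x"
    and p_min: "\<And>k. 0 < k \<Longrightarrow> k < p \<Longrightarrow> (?f ^^ k) x \<noteq> x"
    using finite_orbit_periodic_point[of ?S v ?f, OF fin v_in closed] by blast
  have "(?f ^^ k) x \<in> ?S" for k
    by (induction k) (use x(1) closed in auto)
  then have "(?f ^^ k) x \<in> nodes m - {r}" for k using S by blast
  with x(2,3) p_min show ?thesis by (intro exI[of _ p] exI[of _ x]) simp
qed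

lemma successor_cycle_dcycle:
  assumes cover: "out_cover r F" and p: "0 < p" "(successor F ^^ p) x = x"
    and p_min: "\<And>k. 0 < k \<Longrightarrow> k < p \<Longrightarrow> (successor F ^^ k) x \<noteq> x"
    and orbit: "\<And>k. (successor F ^^ k) x \<in> nodes m - {r}"
  defines "C \<equiv> map (\<lambda>k. out_edge F ((successor F ^^ k) x)) [0..<p]"
  shows "dcycle E s t C" "set C \<subseteq> F"
proof -
  let ?f = "successor F"
  have out: "out_edge F ((?f ^^ k) x) \<in> F" "s (out_edge F ((?f ^^ k) x)) = (?f ^^ k) x" for k
    using out_edge[OF cover] orbit by auto
  show "dcycle E s t C" unfolding dcycle_def
  proof (intro conjI allI impI)
    show "C \<noteq> []" using p unfolding C_def by auto
    show "set C \<subseteq> E" using out out_cover_subset[OF cover] unfolding C_def by auto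
    have "map s C = map (\<lambda>k. (?f ^^ k) x) [0..<p]" unfolding C_def using out by auto
    then show "distinct (map s C)"
      using funpow_minimal_period_distinct[OF p(2) p_min] by (auto simp: distinct_conv_nth nat_neq_iff)
    fix i assume "i < length C"
    then have i: "i < p" unfolding C_def by auto
    have "t (C ! i) = (?f ^^ Suc i) x" unfolding C_def using i by (simp add: successor_def)
    also have "\<dots> = (?f ^^ ((i + 1) mod p)) x"
      using i p(2) by (cases "Suc i = p") auto
    also have "\<dots> = s (C ! ((i + 1) mod length C))" unfolding C_def using out p(1) by simp
    finally show "t (C ! i) = s (C ! ((i + 1) mod length C))" .
  qed
  show "set C \<subseteq> F" unfolding C_def using out by auto
qed

lemma not_leads_to_root_dcycle:
  assumes cover: "out_cover r F" and "\<not> leads_to_root r F"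
  obtains C where "dcycle E s t C" "set C \<subseteq> F"
proof -
  obtain v where "v \<in> nodes m" "\<forall>k. (successor F ^^ k) v \<noteq> r"
    using assms(2) unfolding leads_to_root_def by auto
  then obtain p x where "0 < p" "(successor F ^^ p) x = x"
    "\<forall>k. 0 < k \<longrightarrow> k < p \<longrightarrow> (successor F ^^ k) x \<noteq> x"
    "\<forall>k. (successor F ^^ k) x \<in> nodes m - {r}"
    using successor_periodic_orbit[OF cover] by blast
  from successor_cycle_dcycle[OF cover this[rule_format]] show ?thesis by (rule that)
qed

lemma successor_chain_uconn:
  assumes cover: "out_cover r F" and out: "\<And>u. u \<in> nodes m \<Longrightarrow> u \<noteq> r \<Longrightarrow> out_edge F u \<in> F'"
  shows "w \<in> nodes m \<Longrightarrow> (successor F ^^ k) w = r \<Longrightarrow> (w, r) \<in> uconn F' s t"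
proof (induction k arbitrary: w)
  case 0
  then show ?case unfolding uconn_def by simp
next
  case (Suc k)
  show ?case
  proof (cases "w = r")
    case True
    then show ?thesis unfolding uconn_def by simp
  next
    case False
    have "(successor F ^^ k) (successor F w) = r"
      using Suc.prems(2) by (simp add: funpow_Suc_right del: funpow.simps)
    then have "(successor F w, r) \<in> uconn F' s t"
      using Suc successor_in_nodes[OF cover] False by blast
    moreover have "(w, successor F w) \<in> uconn F' s t"
      using uconn_edge[OF out[OF Suc.prems(1) False]] out_edge[OF cover Suc.prems(1) False]
      unfolding successor_def joins_def by auto
    ultimately show ?thesis using uconn_trans by blast
  qed
qed

lemma component_self: "v \<in> nodes m \<Longrightarrow> v \<in> {w \<in> nodes m. (v, w) \<in> uconn F s t}"
  unfolding uconn_def by auto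

lemma Theta_single_components:
  assumes r: "r \<in> nodes m" and F: "F \<in> Theta m E s t {r}"
  shows "components m F s t = {nodes m}"
proof -
  have "card (components m F s t) = 1" using F unfolding Theta_def by simp
  then obtain X where X: "components m F s t = {X}" by (rule card_1_singletonE)
  have comp: "{w \<in> nodes m. (v, w) \<in> uconn F s t} = X" if "v \<in> nodes m" for v
  proof -
    have "{w \<in> nodes m. (v, w) \<in> uconn F s t} \<in> components m F s t"
      unfolding components_def using that by (intro CollectI exI[of _ v] conjI refl)
    then show ?thesis using X by simp
  qed
  have "nodes m \<subseteq> X"
  proof
    fix v assume v: "v \<in> nodes m"
    have "v \<in> {w \<in> nodes m. (v, w) \<in> uconn F s t}" using v by (rule component_self)
    then show "v \<in> X" unfolding comp[OF v] .
  qed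
  moreover have "X \<subseteq> nodes m" unfolding comp[OF r, symmetric] by auto
  ultimately show ?thesis using X by auto
qed

lemma Theta_single_out_cover:
  assumes r: "r \<in> nodes m" and F: "F \<in> Theta m E s t {r}"
  shows "out_cover r F"
proof -
  have "rooted_at F s (nodes m) r"
    using F Theta_single_components[OF assms] unfolding Theta_def by auto
  then have "{v \<in> nodes m. \<not> (\<exists>e\<in>F. s e = v)} = {r}" unfolding rooted_at_def .
  then have root: "v \<in> nodes m \<and> \<not> (\<exists>e\<in>F. s e = v) \<longleftrightarrow> v = r" for v
    by (simp add: set_eq_iff)
  show ?thesis unfolding out_cover_def
  proof (intro conjI ballI impI)
    show "F \<subseteq> E" using F unfolding Theta_def by simp
    show "\<exists>e\<in>F. s e = v" if "v \<in> nodes m" "v \<noteq> r" for v using root[of v] that by simp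
    show "s e \<noteq> r" if "e \<in> F" for e using root[of r] r that by auto
  qed
qed

lemma Theta_single_leads_to_root:
  assumes r: "r \<in> nodes m" and F: "F \<in> Theta m E s t {r}"
  shows "leads_to_root r F"
proof (rule ccontr)
  assume "\<not> leads_to_root r F"
  then obtain C where C: "dcycle E s t C" "set C \<subseteq> F"
    by (rule not_leads_to_root_dcycle[OF Theta_single_out_cover[OF assms]])
  then obtain e where e: "e \<in> set C" unfolding dcycle_def by (cases C) auto
  have "uconn (set C - {e}) s t \<subseteq> uconn (F - {e}) s t"
    using C(2) by (intro uconn_mono) auto
  then have "(t e, s e) \<in> uconn (F - {e}) s t"
    using dcycle_remove_edge_connected[OF C(1) e] by (rule subsetD)
  moreover have "undirected_acyclic F s t" using F unfolding Theta_def by simp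
  ultimately show False using acyclic_remove_edge_disconnects[of F s t e] C(2) e by auto
qed

lemma Theta_single_inj_source:
  assumes r: "r \<in> nodes m" and F: "F \<in> Theta m E s t {r}"
  shows "inj_on s F"
proof (rule inj_onI, rule ccontr)
  txt \<open>If two edges leave the same node, one of them, \<open>e\<close>, is not the selected out-edge; the
    selected out-edges still connect every node to \<open>r\<close>, so \<open>e\<close> is not a bridge.\<close>
  have cover: "out_cover r F" by (rule Theta_single_out_cover[OF assms])
  fix e1 e2 assume e12: "e1 \<in> F" "e2 \<in> F" "s e1 = s e2" "e1 \<noteq> e2"
  let ?v = "s e1"
  have v: "?v \<in> nodes m" "?v \<noteq> r"
    using e12 cover source_in_nodes out_cover_subset out_cover_root by auto
  obtain e where e: "e \<in> F" "s e = ?v" "e \<noteq> out_edge F ?v"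
    using e12 by (cases "e1 = out_edge F ?v") auto
  have out: "out_edge F u \<in> F - {e}" if "u \<in> nodes m" "u \<noteq> r" for u
    using out_edge[OF cover that] e by auto
  have to_root: "(w, r) \<in> uconn (F - {e}) s t" if w: "w \<in> nodes m" for w
  proof -
    obtain k where "(successor F ^^ k) w = r"
      using Theta_single_leads_to_root[OF assms] w unfolding leads_to_root_def by auto
    with successor_chain_uconn[of r F "F - {e}", OF cover out w] show ?thesis by simp
  qed
  have "t e \<in> nodes m" using target_in_nodes e(1) out_cover_subset[OF cover] by auto
  then have "(t e, s e) \<in> uconn (F - {e}) s t"
    using to_root uconn_sym[OF to_root[OF v(1)]] uconn_trans e(2) by metis
  moreover have "undirected_acyclic F s t" using F unfolding Theta_def by simp
  ultimately show False using acyclic_remove_edge_disconnects[of F s t e] e(1) by simp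
qed

lemma Theta_single_arborescence:
  assumes "r \<in> nodes m" "F \<in> Theta m E s t {r}"
  shows "arborescence r F"
  unfolding arborescence_def out_function_def
  using Theta_single_out_cover[OF assms] Theta_single_inj_source[OF assms]
    Theta_single_leads_to_root[OF assms] by simp

lemma arborescence_undirected_acyclic:
  assumes F: "arborescence r F"
  shows "undirected_acyclic F s t"
  unfolding undirected_acyclic_def
proof (intro notI, elim exE)
  have func: "out_function r F" and cover: "out_cover r F"
    using F unfolding arborescence_def out_function_def by auto
  fix es vs assume cyc: "undirected_cycle F s t es vs"
  have es: "es \<noteq> []" "set es \<subseteq> F" using cyc unfolding undirected_cycle_def by auto
  have sources: "s ` set es = set (butlast vs)" and targets: "t ` set es \<subseteq> set (butlast vs)"
    using undirected_cycle_vertices[OF cyc] inj_on_subset[of s F] func es(2)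
    unfolding out_function_def by auto
  have "\<not> leads_to_root r F"
  proof (rule closed_set_not_leads_to_root)
    show "s ` set es \<subseteq> nodes m" using es out_cover_subset[OF cover] source_in_nodes by auto
    show "s (hd es) \<in> s ` set es" using es by auto
    show "r \<notin> s ` set es" using es out_cover_root[OF cover] by auto
    show "successor F v \<in> s ` set es" if v: "v \<in> s ` set es" for v
    proof -
      obtain e where e: "e \<in> set es" "v = s e" using v by auto
      then have "successor F v = t e" using successor_source[OF func] es(2) by auto
      then show ?thesis using e(1) sources targets by auto
    qed
  qed
  then show False using F unfolding arborescence_def by simp
qed

lemma arborescence_components:
  assumes r: "r \<in> nodes m" and F: "arborescence r F"
  shows "components m F s t = {nodes m}"
proof -
  have cover: "out_cover r F" using F unfolding arborescence_def out_function_def by simp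
  have to_root: "(w, r) \<in> uconn F s t" if w: "w \<in> nodes m" for w
  proof -
    obtain k where "(successor F ^^ k) w = r" using F w unfolding arborescence_def leads_to_root_def by auto
    with successor_chain_uconn[of r F F, OF cover _ w] out_edge(1)[OF cover] show ?thesis by simp
  qed
  have "{w \<in> nodes m. (v, w) \<in> uconn F s t} = nodes m" if v: "v \<in> nodes m" for v
  proof -
    have "(v, w) \<in> uconn F s t" if w: "w \<in> nodes m" for w
      using uconn_trans[OF to_root[OF v] uconn_sym[OF to_root[OF w]]] .
    then show ?thesis by auto
  qed
  then show ?thesis unfolding components_def using r by auto
qed

lemma arborescence_Theta_single:
  assumes r: "r \<in> nodes m" and F: "arborescence r F"
  shows "F \<in> Theta m E s t {r}"
proof -
  have cover: "out_cover r F" using F unfolding arborescence_def out_function_def by simp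
  have "rooted_at F s (nodes m) r" using cover r unfolding rooted_at_def out_cover_def by auto
  then show ?thesis unfolding Theta_def
    using out_cover_subset[OF cover] arborescence_undirected_acyclic[OF F]
      arborescence_components[OF assms] r by auto
qed

lemma Theta_single_iff_arborescence: "r \<in> nodes m \<Longrightarrow> F \<in> Theta m E s t {r} \<longleftrightarrow> arborescence r F"
  using Theta_single_arborescence arborescence_Theta_single by blast

lemma Upsilon_eq_sum_arborescences:
  "r \<in> nodes m \<Longrightarrow> Upsilon m E s t lab r = (\<Sum>F\<in>{F. arborescence r F}. prod lab F)"
  unfolding Upsilon_def using Theta_single_iff_arborescence by (intro sum.cong) auto

lemma arborescence_nonempty:
  assumes "1 \<le> m" "r \<in> nodes m" "arborescence r F"
  shows "F \<noteq> {}"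
proof -
  obtain v where "v \<in> nodes m" "v \<noteq> r"
    using assms(1,2) unfolding nodes_def by (cases "r = 1") (auto intro: that[of 2] that[of 1])
  then show ?thesis using assms(3) unfolding arborescence_def out_function_def out_cover_def by auto
qed

lemma out_function_exchange:
  assumes Z: "out_function r Z" and e: "e \<in> Z" and e': "e' \<in> E" "s e' = s e"
  shows "out_function r (insert e' (Z - {e}))"
proof -
  have cover: "out_cover r Z" and inj: "inj_on s Z" using Z unfolding out_function_def by auto
  have "out_cover r (insert e' (Z - {e}))" unfolding out_cover_def
  proof (intro conjI ballI impI)
    show "insert e' (Z - {e}) \<subseteq> E" using out_cover_subset[OF cover] e' by auto
    show "\<exists>x\<in>insert e' (Z - {e}). s x = v" if v: "v \<in> nodes m" "v \<noteq> r" for v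
    proof -
      obtain x where "x \<in> Z" "s x = v" using cover v unfolding out_cover_def by auto
      then show ?thesis using e' by (cases "x = e") auto
    qed
    show "s x \<noteq> r" if x: "x \<in> insert e' (Z - {e})" for x
      using x out_cover_root[OF cover] out_cover_root[OF cover e] e'(2) by auto
  qed
  moreover have "inj_on s (insert e' (Z - {e}))"
    using inj_on_subset[OF inj] inj e e' by (auto simp: inj_on_eq_iff)
  ultimately show ?thesis unfolding out_function_def by simp
qed

lemma exchange_dcycle_not_leads_to_root:
  assumes Z: "out_function r Z" "e \<in> Z" and e': "s e' = s e"
    and cover: "out_cover r (insert e' (Z - {e}))"
    and C: "dcycle E s t C" "set C \<subseteq> insert e' (Z - {e})" and te: "t e \<in> s ` set C"
  shows "\<not> leads_to_root r Z"
proof (rule closed_set_not_leads_to_root)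
  show "s ` set C \<subseteq> nodes m" using C out_cover_subset[OF cover] source_in_nodes by auto
  show "t e \<in> s ` set C" by (rule te)
  show "r \<notin> s ` set C" using C out_cover_root[OF cover] by auto
  show "successor Z v \<in> s ` set C" if v: "v \<in> s ` set C" for v
  proof -
    obtain x where x: "x \<in> set C" "v = s x" using v by auto
    show ?thesis
    proof (cases "x = e'")
      case True
      then have "successor Z v = t e" using successor_source[OF Z] e' x(2) by simp
      then show ?thesis using te by simp
    next
      case False
      then have "x \<in> Z" using x(1) C(2) by auto
      then have "successor Z v = t x" using successor_source[OF Z(1)] x(2) by simp
      then show ?thesis using dcycle_target_in_sources[OF C(1) x(1)] by simp
    qed
  qed
qed

end

section \<open>The matrix-tree theorem\<close>

context finite_multidigraph
begin

definition edges_out :: "nat \<Rightarrow> 'e set" where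
  "edges_out j = {e \<in> E. s e = j + 1}"

text \<open>Index \<open>i < m\<close> stands for node \<open>i + 1\<close>.  Column \<open>j\<close> of the Laplacian is the sum of
  \<open>lab e\<close> times the incidence column of \<open>e\<close> (\<open>1\<close> at the head, \<open>-1\<close> at the tail) over the edges
  leaving node \<open>j + 1\<close>.\<close>

definition incidence :: "'e \<Rightarrow> nat \<Rightarrow> nat \<Rightarrow> 'a::comm_ring_1" where
  "incidence e i j = (if t e = i + 1 then 1 else 0) - (if i = j then 1 else 0)"

lemma finite_edges_out: "finite (edges_out j)"
  unfolding edges_out_def using finite_edges by simp

lemma laplacian_column:
  fixes lab :: "'e \<Rightarrow> 'a::comm_ring_1"
  assumes i: "i < m" and j: "j < m"
  shows "laplacian m E s t lab (i + 1) (j + 1) = (\<Sum>e\<in>edges_out j. lab e * incidence e i j)"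
proof (cases "i = j")
  case False
  have "laplacian m E s t lab (i + 1) (j + 1) = (\<Sum>e\<in>{e\<in>edges_out j. t e = i + 1}. lab e)"
    unfolding laplacian_def lap_off_def edges_out_def using False by (auto intro: sum.cong)
  also have "\<dots> = (\<Sum>e\<in>edges_out j. if t e = i + 1 then lab e else 0)"
    by (rule sum.inter_filter[OF finite_edges_out])
  also have "\<dots> = (\<Sum>e\<in>edges_out j. lab e * incidence e i j)"
    unfolding incidence_def using False by (intro sum.cong) auto
  finally show ?thesis .
next
  case True
  have "(\<Sum>k\<in>nodes m - {j + 1}. lap_off E s t lab k (j + 1))
      = (\<Sum>k\<in>nodes m - {j + 1}. sum lab {e\<in>edges_out j. t e = k})"
    unfolding lap_off_def edges_out_def by (intro sum.cong refl arg_cong2[where f=sum]) auto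
  also have "\<dots> = sum lab (edges_out j)"
  proof (rule sum.group)
    show "finite (edges_out j)" by (rule finite_edges_out)
    show "finite (nodes m - {j + 1})" using finite_nodes by simp
    show "t ` edges_out j \<subseteq> nodes m - {j + 1}"
      unfolding edges_out_def using target_in_nodes source_neq_target by fastforce
  qed
  finally have "laplacian m E s t lab (i + 1) (j + 1) = - sum lab (edges_out j)"
    unfolding laplacian_def using True by simp
  also have "\<dots> = (\<Sum>e\<in>edges_out j. lab e * incidence e i j)"
    unfolding sum_negf[symmetric]
  proof (rule sum.cong[OF refl])
    fix e assume "e \<in> edges_out j"
    then have "t e \<noteq> j + 1" using source_neq_target unfolding edges_out_def by fastforce
    then show "- lab e = lab e * incidence e i j" unfolding incidence_def using True by simp
  qed
  finally show ?thesis .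
qed

lemma out_choice_source:
  assumes "f \<in> PiE {..<m} edges_out" "j < m"
  shows "f j \<in> E" "s (f j) = j + 1"
  using assms unfolding edges_out_def by auto

lemma inj_on_out_choice:
  assumes f: "f \<in> PiE {..<m} edges_out"
  shows "inj_on f {..<m}"
proof (rule inj_onI)
  fix x y assume "x \<in> {..<m}" "y \<in> {..<m}" "f x = f y"
  then have "x + 1 = y + 1" using out_choice_source(2)[OF f] by (metis lessThan_iff)
  then show "x = y" by simp
qed

lemma out_choice_out_function:
  assumes f: "f \<in> PiE {..<m} edges_out"
  shows "out_function (m + 1) (f ` {..<m})"
proof -
  have "out_cover (m + 1) (f ` {..<m})" unfolding out_cover_def
  proof (intro conjI ballI impI)
    show "f ` {..<m} \<subseteq> E" using out_choice_source[OF f] by auto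
    show "\<exists>e\<in>f ` {..<m}. s e = v" if v: "v \<in> nodes m" "v \<noteq> m + 1" for v
    proof -
      have "v - 1 < m" "v = v - 1 + 1" using v unfolding nodes_def by auto
      then show ?thesis using out_choice_source(2)[OF f] by (metis imageI lessThan_iff)
    qed
    show "s e \<noteq> m + 1" if "e \<in> f ` {..<m}" for e using that out_choice_source(2)[OF f] by auto
  qed
  moreover have "inj_on s (f ` {..<m})"
    using out_choice_source(2)[OF f] by (auto simp: inj_on_def)
  ultimately show ?thesis unfolding out_function_def by simp
qed

lemma out_choice_successor:
  assumes f: "f \<in> PiE {..<m} edges_out" and j: "j < m"
  shows "successor (f ` {..<m}) (j + 1) = t (f j)"
  using successor_source[OF out_choice_out_function[OF f], of "f j"] out_choice_source(2)[OF f j] j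
  by simp

lemma incidence_prod_zero:
  assumes f: "f \<in> PiE {..<m} edges_out" and leads: "leads_to_root (m + 1) (f ` {..<m})"
    and p: "p permutes {0..<m}" "p \<noteq> id"
  shows "(\<Prod>j<m. incidence (f j) (p j) j :: 'a::comm_ring_1) = 0"
proof (rule ccontr)
  assume nz: "(\<Prod>j<m. incidence (f j) (p j) j :: 'a) \<noteq> 0"
  have p_lt: "p j < m" if "j < m" for j
    using permutes_in_image[OF p(1), of j] that by auto
  have moved: "t (f j) = p j + 1" if "j < m" "p j \<noteq> j" for j
  proof (rule ccontr)
    assume "t (f j) \<noteq> p j + 1"
    then have "incidence (f j) (p j) j = (0::'a)" unfolding incidence_def using that by simp
    then have "(\<Prod>j<m. incidence (f j) (p j) j :: 'a) = 0" using that by (intro prod_zero) auto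
    then show False using nz by simp
  qed
  text \<open>The nodes \<open>j + 1\<close> moved by \<open>p\<close> form a trap for the successor map.\<close>
  obtain j0 where "p j0 \<noteq> j0" using p(2) by (meson eq_id_iff)
  then have j0: "j0 < m" "p j0 \<noteq> j0" using permutes_not_in[OF p(1), of j0] by auto
  have "\<not> leads_to_root (m + 1) (f ` {..<m})"
  proof (rule closed_set_not_leads_to_root)
    let ?S = "(\<lambda>j. j + 1) ` {j. j < m \<and> p j \<noteq> j}"
    show "?S \<subseteq> nodes m" unfolding nodes_def by auto
    show "j0 + 1 \<in> ?S" using j0 by auto
    show "m + 1 \<notin> ?S" by auto
    show "successor (f ` {..<m}) v \<in> ?S" if "v \<in> ?S" for v
    proof -
      obtain j where j: "j < m" "p j \<noteq> j" "v = j + 1" using \<open>v \<in> ?S\<close> by auto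
      have "p (p j) \<noteq> p j" using j(2) permutes_inj[OF p(1)] by (metis injD)
      moreover have "successor (f ` {..<m}) v = p j + 1"
        using out_choice_successor[OF f j(1)] moved[OF j(1,2)] j(3) by simp
      ultimately show ?thesis using p_lt[OF j(1)] by auto
    qed
  qed
  then show False using leads by simp
qed

lemma incidence_mat_dcycle_kernel:
  assumes f: "f \<in> PiE {..<m} edges_out" and C: "dcycle E s t C" "set C \<subseteq> f ` {..<m}"
  shows "mat m m (\<lambda>(i, j). incidence (f j) i j) *\<^sub>v vec m (\<lambda>j. if f j \<in> set C then 1 else 0)
    = (0\<^sub>v m :: 'a::comm_ring_1 vec)"
    (is "?M *\<^sub>v ?v = _")
proof (rule eq_vecI)
  let ?J = "{j \<in> {..<m}. f j \<in> set C}"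
  fix i assume i: "i < dim_vec (0\<^sub>v m :: 'a vec)"
  have "(?M *\<^sub>v ?v) $ i = (\<Sum>j\<in>{0..<m}. incidence (f j) i j * ?v $ j)"
    using i by (simp add: scalar_prod_def)
  also have "\<dots> = (\<Sum>j<m. if f j \<in> set C then incidence (f j) i j else 0)"
    unfolding lessThan_atLeast0 by (intro sum.cong) auto
  also have "\<dots> = (\<Sum>j\<in>?J. incidence (f j) i j)"
    by (rule sum.inter_filter[symmetric]) (rule finite_lessThan)
  also have "\<dots> = (\<Sum>j\<in>?J. incidence (f j) i (s (f j) - 1))"
  proof (rule sum.cong[OF refl])
    fix j assume "j \<in> ?J"
    then show "incidence (f j) i j = incidence (f j) i (s (f j) - 1)"
      using out_choice_source(2)[OF f, of j] by simp
  qed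
  also have "\<dots> = (\<Sum>e\<in>f ` ?J. incidence e i (s e - 1))"
    by (subst sum.reindex) (auto intro: inj_on_subset[OF inj_on_out_choice[OF f]])
  also have "f ` ?J = set C" using C(2) by blast
  also have "(\<Sum>e\<in>set C. incidence e i (s e - 1) :: 'a) =
      (\<Sum>e\<in>set C. (if t e = i + 1 then 1 else 0) - (if s e = i + 1 then 1 else 0))"
  proof (rule sum.cong[OF refl])
    fix e assume "e \<in> set C"
    then obtain j where "j < m" "e = f j" using C(2) by blast
    then have "s e = j + 1" using out_choice_source(2)[OF f] by simp
    then show "incidence e i (s e - 1) =
        (if t e = i + 1 then 1 else 0) - (if s e = i + 1 then 1 else (0::'a))"
      unfolding incidence_def by auto
  qed
  also have "\<dots> = (\<Sum>e\<in>set C. if t e = i + 1 then 1 else 0) - (\<Sum>e\<in>set C. if s e = i + 1 then 1 else 0)"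
    by (rule sum_subtractf)
  also have "\<dots> = 0"
    using dcycle_sum_target_source[OF C(1), of "\<lambda>v. if v = i + 1 then 1 else (0::'a)"] by simp
  finally show "(?M *\<^sub>v ?v) $ i = 0\<^sub>v m $ i" using i by simp
qed simp

lemma det_incidence_mat:
  assumes f: "f \<in> PiE {..<m} edges_out"
  shows "det (mat m m (\<lambda>(i, j). incidence (f j) i j) :: 'a::comm_ring_1 mat) =
    (if leads_to_root (m + 1) (f ` {..<m}) then (-1) ^ m else 0)"
proof -
  let ?M = "mat m m (\<lambda>(i, j). incidence (f j) i j) :: 'a mat"
  let ?P = "{p. p permutes {0..<m}}"
  let ?F = "f ` {..<m}"
  have M: "?M \<in> carrier_mat m m" by simp
  show ?thesis
  proof (cases "leads_to_root (m + 1) ?F")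
    case True
    have p_lt: "p j < m" if "p permutes {0..<m}" "j < m" for p j
      using permutes_in_image[OF that(1), of j] that(2) by auto
    have no_loop: "t (f j) \<noteq> j + 1" if "j < m" for j
      using out_choice_source[OF f that] source_neq_target by metis
    have "det ?M = (\<Sum>p\<in>?P. signof p * (\<Prod>j<m. incidence (f j) (p j) j))"
      unfolding det_col[OF M] using p_lt by (intro sum.cong refl arg_cong2[where f="(*)"] prod.cong) auto
    also have "\<dots> = signof id * (\<Prod>j<m. incidence (f j) (id j) j) +
        (\<Sum>p\<in>?P - {id}. signof p * (\<Prod>j<m. incidence (f j) (p j) j))"
      by (rule sum.remove) (auto simp: finite_permutations permutes_id)
    also have "(\<Sum>p\<in>?P - {id}. signof p * (\<Prod>j<m. incidence (f j) (p j) j) :: 'a) = 0"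
    proof (rule sum.neutral, intro ballI)
      fix p assume "p \<in> ?P - {id}"
      then show "signof p * (\<Prod>j<m. incidence (f j) (p j) j) = (0::'a)"
        using incidence_prod_zero[OF f True, of p, where 'a='a] by simp
    qed
    also have "(\<Prod>j<m. incidence (f j) (id j) j :: 'a) = (\<Prod>j<m. -1)"
      using no_loop by (intro prod.cong) (auto simp: incidence_def)
    finally show ?thesis using True by simp
  next
    case False
    have "out_cover (m + 1) ?F" using out_choice_out_function[OF f] unfolding out_function_def by simp
    then obtain C where C: "dcycle E s t C" "set C \<subseteq> ?F"
      using False by (rule not_leads_to_root_dcycle)
    then obtain e where "e \<in> set C" unfolding dcycle_def by (cases C) auto
    then obtain j where "j < m" "f j \<in> set C" using C(2) by blast
    then have "det ?M = 0"
      by (intro det_zero_if_kernel_vector[OF M _ incidence_mat_dcycle_kernel[OF f C]]) auto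
    then show ?thesis using False by simp
  qed
qed

lemma arborescence_out_choice:
  assumes T: "arborescence (m + 1) T"
  defines "f \<equiv> \<lambda>j\<in>{..<m}. out_edge T (j + 1)"
  shows "f \<in> PiE {..<m} edges_out" "f ` {..<m} = T"
proof -
  have func: "out_function (m + 1) T" using T unfolding arborescence_def by simp
  then have cover: "out_cover (m + 1) T" unfolding out_function_def by simp
  have node: "j + 1 \<in> nodes m" "j + 1 \<noteq> m + 1" if "j < m" for j
    using that unfolding nodes_def by auto
  show "f \<in> PiE {..<m} edges_out"
    unfolding f_def edges_out_def using out_edge[OF cover node] out_cover_subset[OF cover] by auto
  show "f ` {..<m} = T"
  proof (intro equalityI subsetI)
    show "e \<in> T" if "e \<in> f ` {..<m}" for e
      using that out_edge(1)[OF cover node] unfolding f_def by auto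
    show "e \<in> f ` {..<m}" if e: "e \<in> T" for e
    proof -
      have "s e \<in> nodes m" "s e \<noteq> m + 1"
        using e source_in_nodes out_cover_subset[OF cover] out_cover_root[OF cover] by auto
      then have "s e - 1 < m" "s e = s e - 1 + 1" unfolding nodes_def by auto
      then have "f (s e - 1) = e" unfolding f_def using out_edge_source[OF func e] by simp
      then show ?thesis using \<open>s e - 1 < m\<close> by force
    qed
  qed
qed

lemma bij_betw_out_choices_arborescences:
  "bij_betw (\<lambda>f. f ` {..<m})
     {f \<in> PiE {..<m} edges_out. leads_to_root (m + 1) (f ` {..<m})} {T. arborescence (m + 1) T}"
proof (rule bij_betw_imageI)
  show "inj_on (\<lambda>f. f ` {..<m}) {f \<in> PiE {..<m} edges_out. leads_to_root (m + 1) (f ` {..<m})}"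
    unfolding inj_on_def
  proof (intro ballI impI)
    fix g h assume "g \<in> {f \<in> PiE {..<m} edges_out. leads_to_root (m + 1) (f ` {..<m})}"
      "h \<in> {f \<in> PiE {..<m} edges_out. leads_to_root (m + 1) (f ` {..<m})}"
      and eq: "g ` {..<m} = h ` {..<m}"
    then have g: "g \<in> PiE {..<m} edges_out" and h: "h \<in> PiE {..<m} edges_out" by auto
    show "g = h"
    proof (rule PiE_ext[OF g h])
      fix j assume j: "j \<in> {..<m}"
      then have "g j \<in> h ` {..<m}" using eq by blast
      then obtain j' where j': "j' < m" "g j = h j'" by auto
      then have "j + 1 = j' + 1"
        using out_choice_source(2)[OF g] out_choice_source(2)[OF h] j by force
      then show "g j = h j" using j' by simp
    qed
  qed
  show "(\<lambda>f. f ` {..<m}) ` {f \<in> PiE {..<m} edges_out. leads_to_root (m + 1) (f ` {..<m})} =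
      {T. arborescence (m + 1) T}"
  proof (intro equalityI subsetI)
    fix T assume "T \<in> (\<lambda>f. f ` {..<m}) ` {f \<in> PiE {..<m} edges_out. leads_to_root (m + 1) (f ` {..<m})}"
    then show "T \<in> {T. arborescence (m + 1) T}"
      using out_choice_out_function unfolding arborescence_def by auto
  next
    fix T assume "T \<in> {T. arborescence (m + 1) T}"
    then have T: "arborescence (m + 1) T" by simp
    let ?f = "\<lambda>j\<in>{..<m}. out_edge T (j + 1)"
    have "?f \<in> PiE {..<m} edges_out" "?f ` {..<m} = T" by (rule arborescence_out_choice[OF T])+
    moreover have "leads_to_root (m + 1) T" using T unfolding arborescence_def by simp
    ultimately show "T \<in> (\<lambda>f. f ` {..<m}) ` {f \<in> PiE {..<m} edges_out. leads_to_root (m + 1) (f ` {..<m})}"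
      by (intro image_eqI[of T _ ?f]) auto
  qed
qed

lemma det_eq_Upsilon:
  fixes lab :: "'e \<Rightarrow> 'a::comm_ring_1" and A :: "'a mat"
  assumes A: "A \<in> carrier_mat m m"
    and entries: "\<And>i j. i < m \<Longrightarrow> j < m \<Longrightarrow> A $$ (i, j) = laplacian m E s t lab (i + 1) (j + 1)"
  shows "det A = (-1) ^ m * Upsilon m E s t lab (m + 1)"
proof -
  let ?F = "\<lambda>f. f ` {..<m}"
  let ?S = "{f \<in> PiE {..<m} edges_out. leads_to_root (m + 1) (?F f)}"
  have prod_F: "(\<Prod>j<m. lab (f j)) = prod lab (?F f)" if "f \<in> PiE {..<m} edges_out" for f
    using prod.reindex[OF inj_on_out_choice[OF that], of lab] by simp
  have "det A = (\<Sum>f\<in>PiE {..<m} edges_out.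
      (\<Prod>j<m. lab (f j)) * det (mat m m (\<lambda>(i, j). incidence (f j) i j) :: 'a mat))"
    using A finite_edges_out entries laplacian_column by (intro det_sum_columns) auto
  also have "\<dots> = (\<Sum>f\<in>PiE {..<m} edges_out. if leads_to_root (m + 1) (?F f) then (-1) ^ m * prod lab (?F f) else 0)"
    using det_incidence_mat[where 'a='a] prod_F by (intro sum.cong) (auto simp: mult.commute)
  also have "\<dots> = (\<Sum>f\<in>?S. (-1) ^ m * prod lab (?F f))"
    by (rule sum.inter_filter[symmetric]) (auto intro!: finite_PiE simp: finite_edges_out)
  also have "\<dots> = (-1) ^ m * (\<Sum>f\<in>?S. prod lab (?F f))"
    by (simp add: sum_distrib_left)
  also have "(\<Sum>f\<in>?S. prod lab (?F f)) = (\<Sum>T\<in>{T. arborescence (m + 1) T}. prod lab T)"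
    by (rule sum.reindex_bij_betw[OF bij_betw_out_choices_arborescences])
  also have "\<dots> = Upsilon m E s t lab (m + 1)"
    using Upsilon_eq_sum_arborescences[of "m + 1" lab] by (simp add: nodes_def)
  finally show ?thesis .
qed

end

section \<open>P-graphs\<close>

locale finite_P_graph = finite_multidigraph m E s t
  for m :: nat and E :: "'e set" and s t :: "'e \<Rightarrow> nat" +
  fixes lab :: "'e \<Rightarrow> 'r::{comm_ring_1,ordered_comm_semiring_strict}" and mu :: "'e \<Rightarrow> 'e set"
  assumes P_graph: "P_graph E s t lab mu"
begin

abbreviation "Eneg \<equiv> Eminus E lab"
abbreviation "Epos \<equiv> Eplus E lab"
abbreviation "Imu \<equiv> im_mu E lab mu"
abbreviation "mu_inv \<equiv> mu_star E lab mu"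

lemma edge_partition: "edge_partition E s t lab mu"
  using P_graph unfolding P_graph_def by simp

lemma mu_subset_Epos: "e \<in> Eneg \<Longrightarrow> mu e \<subseteq> Epos"
  using edge_partition unfolding edge_partition_def by (elim conjE) blast

lemma Epos_Un_Eneg: "E = Epos \<union> Eneg"
  using edge_partition unfolding edge_partition_def by (elim conjE)

lemma Eneg_Epos_disjoint: "Epos \<inter> Eneg = {}"
  using edge_partition unfolding edge_partition_def by (elim conjE)

lemma Eneg_Epos_cover: "e \<in> E \<Longrightarrow> e \<notin> Eneg \<Longrightarrow> e \<in> Epos"
  using Epos_Un_Eneg by (metis UnE)

lemma Eneg_subset: "Eneg \<subseteq> E"
  unfolding Eminus_def by auto

lemma Epos_subset: "Epos \<subseteq> E"
  unfolding Eplus_def by auto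

lemma dcycle_at_most_one_Eneg: "dcycle E s t C \<Longrightarrow> card (set C \<inter> Eneg) \<le> 1"
  using edge_partition unfolding edge_partition_def by (elim conjE) blast

lemma mu_source: "e \<in> Eneg \<Longrightarrow> e' \<in> mu e \<Longrightarrow> s e' = s e"
  using edge_partition unfolding edge_partition_def by (elim conjE) blast

lemma mu_dcycle_target:
  assumes "e \<in> Eneg" "e' \<in> mu e" "dcycle E s t C" "e' \<in> set C"
  shows "t e \<in> s ` set C"
proof -
  have "t e \<in> set (map s C)"
    using edge_partition assms unfolding edge_partition_def by (elim conjE) blast
  then show ?thesis by simp
qed

lemma mu_disjoint: "e \<in> Eneg \<Longrightarrow> e2 \<in> Eneg \<Longrightarrow> e \<noteq> e2 \<Longrightarrow> mu e \<inter> mu e2 = {}"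
  using edge_partition unfolding edge_partition_def by (elim conjE) blast

lemma lab_add_mu_nonneg: "e \<in> Eneg \<Longrightarrow> 0 \<le> lab e + (\<Sum>e'\<in>mu e. lab e')"
  using P_graph unfolding P_graph_def by auto

lemma finite_mu: "e \<in> Eneg \<Longrightarrow> finite (mu e)"
  using mu_subset_Epos Epos_subset by (intro finite_subset[OF _ finite_edges]) blast

lemma Imu_subset_Epos: "Imu \<subseteq> Epos"
  unfolding im_mu_def using mu_subset_Epos by auto

lemma mu_inv_eq: assumes "e \<in> Eneg" "e' \<in> mu e" shows "mu_inv e' = e"
  unfolding mu_star_def
proof (rule the_equality)
  show "e \<in> Eneg \<and> e' \<in> mu e" using assms by simp
  show "x = e" if "x \<in> Eneg \<and> e' \<in> mu x" for x using that mu_disjoint assms by blast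
qed

lemma mu_inv:
  assumes "y \<in> Imu"
  shows "mu_inv y \<in> Eneg" "y \<in> mu (mu_inv y)" "s (mu_inv y) = s y"
proof -
  obtain e where "e \<in> Eneg" "y \<in> mu e" using assms unfolding im_mu_def by auto
  then show "mu_inv y \<in> Eneg" "y \<in> mu (mu_inv y)" "s (mu_inv y) = s y"
    using mu_inv_eq mu_source by auto
qed

lemma mu_inv_notin_Imu: "y \<in> Imu \<Longrightarrow> mu_inv y \<notin> Imu"
  using mu_inv(1) Imu_subset_Epos Eneg_Epos_disjoint by blast

definition mu_swap :: "'e set \<Rightarrow> 'e set \<Rightarrow> 'e set" where
  "mu_swap T Y = (T - Y) \<union> mu_inv ` Y"

lemma mu_swap_empty: "mu_swap T {} = T"
  unfolding mu_swap_def by simp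

lemma mu_swap_mu_swap:
  assumes "Y \<subseteq> Imu" "X \<subseteq> Imu" "X \<inter> Y = {}"
  shows "mu_swap (mu_swap T Y) X = mu_swap T (Y \<union> X)"
proof -
  have "mu_inv ` Y \<inter> X = {}" using assms mu_inv_notin_Imu by auto
  then show ?thesis unfolding mu_swap_def using assms by auto
qed

lemma inj_on_source_mu_swap:
  assumes inj: "inj_on s T" and Y: "Y \<subseteq> T \<inter> Imu"
  shows "inj_on s (mu_swap T Y)"
proof (rule inj_onI)
  have inv: "s (mu_inv y) = s y" if "y \<in> Y" for y using mu_inv(3) that Y by auto
  have origin: "\<exists>e0\<in>T. s e0 = s e \<and> e = (if e0 \<in> Y then mu_inv e0 else e0)"
    if "e \<in> mu_swap T Y" for e
    using that inv Y unfolding mu_swap_def by auto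
  fix a b assume a: "a \<in> mu_swap T Y" and b: "b \<in> mu_swap T Y" and eq: "s a = s b"
  obtain a0 where a0: "a0 \<in> T" "s a0 = s a" "a = (if a0 \<in> Y then mu_inv a0 else a0)"
    using origin[OF a] by blast
  obtain b0 where b0: "b0 \<in> T" "s b0 = s b" "b = (if b0 \<in> Y then mu_inv b0 else b0)"
    using origin[OF b] by blast
  have "a0 = b0" using inj_onD[OF inj _ a0(1) b0(1)] a0(2) b0(2) eq by simp
  then show "a = b" using a0(3) b0(3) by simp
qed

lemma mu_swap_out_function:
  assumes T: "out_function r T" and Y: "Y \<subseteq> T \<inter> Imu"
  shows "out_function r (mu_swap T Y)"
proof -
  have cover: "out_cover r T" and inj: "inj_on s T" using T unfolding out_function_def by auto
  have inv: "mu_inv y \<in> Eneg" "s (mu_inv y) = s y" if "y \<in> Y" for y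
    using mu_inv that Y by auto
  have "out_cover r (mu_swap T Y)" unfolding out_cover_def
  proof (intro conjI ballI impI)
    show "mu_swap T Y \<subseteq> E"
      unfolding mu_swap_def using out_cover_subset[OF cover] inv Eneg_subset by auto
    show "\<exists>e\<in>mu_swap T Y. s e = v" if v: "v \<in> nodes m" "v \<noteq> r" for v
    proof -
      obtain e where e: "e \<in> T" "s e = v" using cover v unfolding out_cover_def by auto
      show ?thesis
      proof (cases "e \<in> Y")
        case True
        then show ?thesis using inv e unfolding mu_swap_def by force
      next
        case False
        then show ?thesis using e unfolding mu_swap_def by auto
      qed
    qed
    show "s e \<noteq> r" if e: "e \<in> mu_swap T Y" for e
    proof -
      consider "e \<in> T" | y where "y \<in> Y" "e = mu_inv y" using e unfolding mu_swap_def by auto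
      then show ?thesis
        by cases (use out_cover_root[OF cover] inv Y in auto)
    qed
  qed
  moreover have "inj_on s (mu_swap T Y)" using inj Y by (rule inj_on_source_mu_swap)
  ultimately show ?thesis unfolding out_function_def by simp
qed

lemma arborescence_swap_mu_edge:
  assumes Z: "arborescence r Z" and e: "e \<in> Z" "e \<in> Eneg" and e': "e' \<in> mu e"
  shows "arborescence r (insert e' (Z - {e}))"
proof -
  let ?Z = "insert e' (Z - {e})"
  have func: "out_function r Z" and leads: "leads_to_root r Z"
    using Z unfolding arborescence_def by auto
  have e'_edge: "e' \<in> E" "s e' = s e"
    using e' mu_subset_Epos[OF e(2)] Epos_subset mu_source[OF e(2)] by auto
  have func': "out_function r ?Z" by (rule out_function_exchange[OF func e(1) e'_edge])
  have "leads_to_root r ?Z"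
  proof (rule ccontr)
    assume "\<not> leads_to_root r ?Z"
    moreover have cover': "out_cover r ?Z" using func' unfolding out_function_def by simp
    ultimately obtain C where C: "dcycle E s t C" "set C \<subseteq> ?Z"
      using not_leads_to_root_dcycle by metis
    show False
    proof (cases "e' \<in> set C")
      case False
      then have "set C \<subseteq> Z" using C(2) by auto
      then show False using dcycle_not_leads_to_root[OF func C(1)] leads by simp
    next
      case True
      have "t e \<in> s ` set C" by (rule mu_dcycle_target[OF e(2) e' C(1) True])
      then have "\<not> leads_to_root r Z"
        by (rule exchange_dcycle_not_leads_to_root[OF func e(1) e'_edge(2) cover' C])
      then show False using leads by simp
    qed
  qed
  then show ?thesis using func' unfolding arborescence_def by simp
qed

lemma arborescence_mu_swap_Un:
  assumes T: "arborescence r T" and Y1: "Y1 \<subseteq> T \<inter> Imu" and Y2: "Y2 \<subseteq> T \<inter> Imu"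
    and T1: "arborescence r (mu_swap T Y1)" and T2: "arborescence r (mu_swap T Y2)"
  shows "arborescence r (mu_swap T (Y1 \<union> Y2))"
proof -
  have func: "out_function r (mu_swap T (Y1 \<union> Y2))"
    using mu_swap_out_function T Y1 Y2 unfolding arborescence_def by auto
  have "leads_to_root r (mu_swap T (Y1 \<union> Y2))"
  proof (rule ccontr)
    assume "\<not> leads_to_root r (mu_swap T (Y1 \<union> Y2))"
    moreover have "out_cover r (mu_swap T (Y1 \<union> Y2))" using func unfolding out_function_def by simp
    ultimately obtain C where C: "dcycle E s t C" "set C \<subseteq> mu_swap T (Y1 \<union> Y2)"
      using not_leads_to_root_dcycle by metis
    text \<open>A cycle must use a swapped-in negative edge from each side, but it contains only one.\<close>
    have "\<not> set C \<subseteq> mu_swap T Y1" "\<not> set C \<subseteq> mu_swap T Y2"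
      using dcycle_not_leads_to_root[OF _ C(1)] T1 T2 unfolding arborescence_def by auto
    then obtain c1 c2 where c1: "c1 \<in> set C" "c1 \<notin> mu_swap T Y1"
      and c2: "c2 \<in> set C" "c2 \<notin> mu_swap T Y2" by auto
    have "c1 \<in> mu_inv ` Y2" "c2 \<in> mu_inv ` Y1" using c1 c2 C(2) unfolding mu_swap_def by auto
    then have "c1 \<noteq> c2" "c1 \<in> Eneg" "c2 \<in> Eneg"
      using c1 c2 mu_inv(1) Y1 Y2 unfolding mu_swap_def by auto
    then have "card {c1, c2} \<le> card (set C \<inter> Eneg)" using c1 c2 by (intro card_mono) auto
    then show False using dcycle_at_most_one_Eneg[OF C(1)] \<open>c1 \<noteq> c2\<close> by simp
  qed
  then show ?thesis using func unfolding arborescence_def by simp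
qed

definition choices :: "'e set \<Rightarrow> ('e \<Rightarrow> 'e) set" where
  "choices Z = PiE (Z \<inter> Eneg) (\<lambda>e. insert e (mu e))"

definition expand :: "'e set \<Rightarrow> ('e \<Rightarrow> 'e) \<Rightarrow> 'e set" where
  "expand Z c = (Z - Eneg) \<union> c ` (Z \<inter> Eneg)"

definition weight :: "'e \<Rightarrow> 'r" where
  "weight e = (if e \<in> Eneg then lab e + sum lab (mu e) else lab e)"

lemma choice:
  assumes "c \<in> choices Z" "e \<in> Z \<inter> Eneg"
  shows "c e \<in> insert e (mu e)" "s (c e) = s e" "c e \<in> E"
    and "c e \<in> Eneg \<Longrightarrow> c e = e" "c e \<noteq> e \<Longrightarrow> c e \<in> mu e"
proof -
  show ce: "c e \<in> insert e (mu e)" using assms unfolding choices_def by auto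
  show "s (c e) = s e" using ce mu_source assms by auto
  show "c e \<in> E" using ce mu_subset_Epos Epos_subset Eneg_subset assms by auto
  show "c e \<in> Eneg \<Longrightarrow> c e = e" using ce mu_subset_Epos Eneg_Epos_disjoint assms by auto
  show "c e \<noteq> e \<Longrightarrow> c e \<in> mu e" using ce by auto
qed

lemma finite_choices: "finite Z \<Longrightarrow> finite (choices Z)"
  unfolding choices_def using finite_mu by (intro finite_PiE) auto

lemma arborescence_expand:
  assumes Z: "arborescence r Z" and c: "c \<in> choices Z"
  shows "arborescence r (expand Z c)"
proof -
  have "arborescence r ((Z - W) \<union> c ` W)" if "finite W" "W \<subseteq> Z \<inter> Eneg" for W
    using that
  proof (induction W rule: finite_induct)
    case empty
    then show ?case using Z by simp
  next
    case (insert x W)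
    let ?Q = "(Z - W) \<union> c ` W"
    have Q: "arborescence r ?Q" "x \<in> ?Q" using insert by auto
    have "x \<notin> c ` W"
    proof
      assume "x \<in> c ` W"
      then obtain w where w: "w \<in> W" "x = c w" by auto
      then have "c w = w" using choice(4)[OF c] insert.prems by auto
      then show False using w insert.hyps(2) by simp
    qed
    then have eq: "(Z - insert x W) \<union> c ` insert x W = insert (c x) (?Q - {x})" by auto
    show ?case
    proof (cases "c x = x")
      case True
      then show ?thesis unfolding eq using Q by (simp add: insert_absorb)
    next
      case False
      then have "c x \<in> mu x" using choice(5)[OF c] insert.prems by auto
      then show ?thesis unfolding eq using arborescence_swap_mu_edge[OF Q] insert.prems by auto
    qed
  qed
  moreover have "finite (Z \<inter> Eneg)" using arborescence_finite[OF Z] by simp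
  ultimately have "arborescence r ((Z - Z \<inter> Eneg) \<union> c ` (Z \<inter> Eneg))" by blast
  moreover have "Z - Z \<inter> Eneg = Z - Eneg" by auto
  ultimately show ?thesis unfolding expand_def by simp
qed

lemma expand_disjoint:
  assumes Z: "out_function r Z" and c: "c \<in> choices Z"
  shows "(Z - Eneg) \<inter> c ` (Z \<inter> Eneg) = {}"
proof -
  have "c e \<notin> Z - Eneg" if e: "e \<in> Z \<inter> Eneg" for e
  proof
    assume "c e \<in> Z - Eneg"
    then have "c e = e"
      using Z e choice(2)[OF c e] unfolding out_function_def by (auto simp: inj_on_eq_iff)
    then show False using \<open>c e \<in> Z - Eneg\<close> e by simp
  qed
  then show ?thesis by auto
qed

lemma inj_on_choice:
  assumes Z: "out_function r Z" and c: "c \<in> choices Z"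
  shows "inj_on c (Z \<inter> Eneg)"
proof (rule inj_onI)
  fix x y assume xy: "x \<in> Z \<inter> Eneg" "y \<in> Z \<inter> Eneg" "c x = c y"
  then have "s x = s y" using choice(2)[OF c] by metis
  then show "x = y" using Z xy unfolding out_function_def by (auto simp: inj_on_eq_iff)
qed

lemma sum_prod_expand:
  assumes Z: "arborescence r Z"
  shows "(\<Sum>c\<in>choices Z. prod lab (expand Z c)) = prod weight Z"
proof -
  have func: "out_function r Z" using Z unfolding arborescence_def by simp
  have fin: "finite Z" using arborescence_finite[OF Z] .
  have "prod lab (expand Z c) = prod lab (Z - Eneg) * (\<Prod>e\<in>Z \<inter> Eneg. lab (c e))"
    if c: "c \<in> choices Z" for c
  proof -
    have "prod lab (expand Z c) = prod lab (Z - Eneg) * prod lab (c ` (Z \<inter> Eneg))"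
      unfolding expand_def by (rule prod.union_disjoint) (use fin expand_disjoint[OF func c] in auto)
    also have "prod lab (c ` (Z \<inter> Eneg)) = (\<Prod>e\<in>Z \<inter> Eneg. lab (c e))"
      using prod.reindex[OF inj_on_choice[OF func c]] by (simp add: comp_def)
    finally show ?thesis .
  qed
  then have "(\<Sum>c\<in>choices Z. prod lab (expand Z c))
      = prod lab (Z - Eneg) * (\<Sum>c\<in>choices Z. \<Prod>e\<in>Z \<inter> Eneg. lab (c e))"
    by (simp add: sum_distrib_left)
  also have "(\<Sum>c\<in>choices Z. \<Prod>e\<in>Z \<inter> Eneg. lab (c e)) = (\<Prod>e\<in>Z \<inter> Eneg. \<Sum>x\<in>insert e (mu e). lab x)"
    unfolding choices_def using fin finite_mu by (intro prod_sum_PiE[symmetric]) auto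
  also have "\<dots> = prod weight (Z \<inter> Eneg)"
  proof (rule prod.cong[OF refl])
    fix e assume e: "e \<in> Z \<inter> Eneg"
    then have "e \<notin> mu e" using mu_subset_Epos Eneg_Epos_disjoint by auto
    then show "(\<Sum>x\<in>insert e (mu e). lab x) = weight e" using e finite_mu unfolding weight_def by simp
  qed
  also have "prod lab (Z - Eneg) = prod weight (Z - Eneg)" unfolding weight_def by (intro prod.cong) auto
  also have "prod weight (Z - Eneg) * prod weight (Z \<inter> Eneg) = prod weight Z"
    using prod.Int_Diff[OF fin, of weight Eneg] by (simp only: mult.commute)
  finally show ?thesis .
qed

definition irreducible_arborescences :: "nat \<Rightarrow> 'e set set" where
  "irreducible_arborescences r =
     {Z. arborescence r Z \<and> (\<forall>X. X \<subseteq> Z \<inter> Imu \<longrightarrow> arborescence r (mu_swap Z X) \<longrightarrow> X = {})}"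

lemma irreducible_arborescencesD:
  assumes "Z \<in> irreducible_arborescences r"
  shows "arborescence r Z" "X \<subseteq> Z \<inter> Imu \<Longrightarrow> arborescence r (mu_swap Z X) \<Longrightarrow> X = {}"
  using assms unfolding irreducible_arborescences_def by auto

lemma Lambda_single_eq:
  assumes r: "r \<in> nodes m"
  shows "Lambda m E s t lab mu {r} = irreducible_arborescences r"
proof -
  have Ezeta: "Ezeta m E s t lab mu {r} Z = {X. X \<subseteq> Z \<inter> Imu \<and> arborescence r (mu_swap Z X)}" for Z
    unfolding Ezeta_def mu_swap_def using Theta_single_iff_arborescence[OF r] by auto
  have "Z \<in> Lambda m E s t lab mu {r} \<longleftrightarrow> Z \<in> irreducible_arborescences r" for Z
  proof (cases "arborescence r Z")
    case True
    then have "{} \<in> Ezeta m E s t lab mu {r} Z" unfolding Ezeta using mu_swap_empty by simp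
    then have "Ezeta m E s t lab mu {r} Z = {{}} \<longleftrightarrow>
        (\<forall>X. X \<subseteq> Z \<inter> Imu \<longrightarrow> arborescence r (mu_swap Z X) \<longrightarrow> X = {})"
      unfolding Ezeta by blast
    then show ?thesis
      unfolding Lambda_def irreducible_arborescences_def
      using Theta_single_iff_arborescence[OF r] True by simp
  next
    case False
    then show ?thesis
      unfolding Lambda_def irreducible_arborescences_def
      using Theta_single_iff_arborescence[OF r] by simp
  qed
  then show ?thesis by blast
qed

definition chosen_mu_edges :: "'e set \<Rightarrow> ('e \<Rightarrow> 'e) \<Rightarrow> 'e set" where
  "chosen_mu_edges Z c = c ` (Z \<inter> Eneg) - (Z \<inter> Eneg)"

lemma choice_moved:
  assumes c: "c \<in> choices Z" and e: "e \<in> Z \<inter> Eneg" "c e \<notin> Z \<inter> Eneg"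
  shows "c e \<in> mu e" "mu_inv (c e) = e"
proof -
  have "c e \<noteq> e" using e by auto
  then show "c e \<in> mu e" using choice(5)[OF c e(1)] by simp
  then show "mu_inv (c e) = e" using mu_inv_eq e by auto
qed

lemma chosen_mu_edges_subset:
  assumes c: "c \<in> choices Z"
  shows "chosen_mu_edges Z c \<subseteq> expand Z c \<inter> Imu"
proof
  fix y assume "y \<in> chosen_mu_edges Z c"
  then obtain e where e: "e \<in> Z \<inter> Eneg" "y = c e" "c e \<notin> Z \<inter> Eneg"
    unfolding chosen_mu_edges_def by auto
  then have "y \<in> Imu" using choice_moved[OF c] unfolding im_mu_def by auto
  moreover have "y \<in> expand Z c" unfolding expand_def using e by auto
  ultimately show "y \<in> expand Z c \<inter> Imu" by simp
qed

lemma mu_swap_expand: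
  assumes Z: "out_function r Z" and c: "c \<in> choices Z"
  shows "mu_swap (expand Z c) (chosen_mu_edges Z c) = Z"
proof
  let ?N = "Z \<inter> Eneg"
  let ?Y = "chosen_mu_edges Z c"
  show "mu_swap (expand Z c) ?Y \<subseteq> Z"
  proof
    fix x assume "x \<in> mu_swap (expand Z c) ?Y"
    then consider "x \<in> expand Z c" "x \<notin> ?Y" | y where "y \<in> ?Y" "x = mu_inv y"
      unfolding mu_swap_def by auto
    then show "x \<in> Z"
    proof cases
      case 1
      then show ?thesis unfolding expand_def chosen_mu_edges_def by auto
    next
      case 2
      then obtain e where "e \<in> ?N" "c e \<notin> ?N" "x = mu_inv (c e)"
        unfolding chosen_mu_edges_def by auto
      then show ?thesis using choice_moved[OF c] by auto
    qed
  qed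
  show "Z \<subseteq> mu_swap (expand Z c) ?Y"
  proof
    fix x assume x: "x \<in> Z"
    consider "x \<notin> Eneg" | "x \<in> ?N" "c x = x" | "x \<in> ?N" "c x \<noteq> x" using x by auto
    then show "x \<in> mu_swap (expand Z c) ?Y"
    proof cases
      case 1
      then show ?thesis using x expand_disjoint[OF Z c]
        unfolding expand_def mu_swap_def chosen_mu_edges_def by auto
    next
      case 2
      then have "x \<in> expand Z c" unfolding expand_def by force
      then show ?thesis using 2 unfolding mu_swap_def chosen_mu_edges_def by auto
    next
      case 3
      then have "c x \<notin> ?N" using choice(4)[OF c] by auto
      then have "c x \<in> ?Y" "mu_inv (c x) = x"
        using 3 choice_moved[OF c] unfolding chosen_mu_edges_def by auto
      then show ?thesis unfolding mu_swap_def by force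
    qed
  qed
qed

lemma irreducible_mu_swap_maximal:
  assumes T: "arborescence r T" and Y1: "Y1 \<subseteq> T \<inter> Imu" and Y2: "Y2 \<subseteq> T \<inter> Imu"
    and irr: "mu_swap T Y1 \<in> irreducible_arborescences r" and T2: "arborescence r (mu_swap T Y2)"
  shows "Y2 \<subseteq> Y1"
proof -
  have "mu_swap (mu_swap T Y1) (Y2 - Y1) = mu_swap T (Y1 \<union> (Y2 - Y1))"
    by (rule mu_swap_mu_swap) (use Y1 Y2 in auto)
  moreover have "arborescence r (mu_swap T (Y1 \<union> Y2))"
    using arborescence_mu_swap_Un[OF T Y1 Y2] irreducible_arborescencesD(1)[OF irr] T2 by simp
  ultimately have "arborescence r (mu_swap (mu_swap T Y1) (Y2 - Y1))" by (simp add: Un_Diff_cancel)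
  moreover have "Y2 - Y1 \<subseteq> mu_swap T Y1 \<inter> Imu" using Y2 unfolding mu_swap_def by blast
  ultimately have "Y2 - Y1 = {}" by (intro irreducible_arborescencesD(2)[OF irr])
  then show ?thesis by blast
qed

lemma expand_inj:
  assumes Z1: "Z1 \<in> irreducible_arborescences r" and Z2: "Z2 \<in> irreducible_arborescences r"
    and c1: "c1 \<in> choices Z1" and c2: "c2 \<in> choices Z2" and eq: "expand Z1 c1 = expand Z2 c2"
  shows "Z1 = Z2" "c1 = c2"
proof -
  have a1: "arborescence r Z1" and a2: "arborescence r Z2"
    using irreducible_arborescencesD(1) Z1 Z2 by auto
  then have f1: "out_function r Z1" and f2: "out_function r Z2" unfolding arborescence_def by auto
  define T where "T = expand Z1 c1"
  have T: "arborescence r T" unfolding T_def by (rule arborescence_expand[OF a1 c1])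
  define Y1 where "Y1 = chosen_mu_edges Z1 c1"
  define Y2 where "Y2 = chosen_mu_edges Z2 c2"
  have Y1: "Y1 \<subseteq> T \<inter> Imu" "mu_swap T Y1 = Z1"
    unfolding T_def Y1_def by (rule chosen_mu_edges_subset[OF c1] mu_swap_expand[OF f1 c1])+
  have Y2: "Y2 \<subseteq> T \<inter> Imu" "mu_swap T Y2 = Z2"
    unfolding T_def eq Y2_def by (rule chosen_mu_edges_subset[OF c2] mu_swap_expand[OF f2 c2])+
  have "Y2 \<subseteq> Y1" using irreducible_mu_swap_maximal[OF T Y1(1) Y2(1)] Y1(2) Y2(2) Z1 a2 by simp
  moreover have "Y1 \<subseteq> Y2" using irreducible_mu_swap_maximal[OF T Y2(1) Y1(1)] Y1(2) Y2(2) Z2 a1 by simp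
  ultimately show Z: "Z1 = Z2" using Y1(2) Y2(2) by simp
  have inj: "inj_on s T" using T unfolding arborescence_def out_function_def by simp
  show "c1 = c2"
  proof (rule PiE_ext)
    show "c1 \<in> PiE (Z1 \<inter> Eneg) (\<lambda>e. insert e (mu e))" using c1 unfolding choices_def .
    show "c2 \<in> PiE (Z1 \<inter> Eneg) (\<lambda>e. insert e (mu e))" using c2 Z unfolding choices_def by simp
    fix e assume e: "e \<in> Z1 \<inter> Eneg"
    have "c1 e \<in> T" unfolding T_def expand_def using e by auto
    moreover have "c2 e \<in> expand Z2 c2" unfolding expand_def using e Z by auto
    then have "c2 e \<in> T" unfolding T_def eq .
    moreover have "s (c1 e) = s (c2 e)" using choice(2)[OF c1 e] choice(2)[OF c2] e Z by auto
    ultimately show "c1 e = c2 e" using inj_onD[OF inj] by simp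
  qed
qed

lemma maximal_mu_swap_irreducible:
  assumes T: "arborescence r T" and Y: "Y \<subseteq> T \<inter> Imu" "arborescence r (mu_swap T Y)"
    and maximal: "\<And>Y'. Y' \<subseteq> T \<inter> Imu \<Longrightarrow> arborescence r (mu_swap T Y') \<Longrightarrow> Y \<subseteq> Y' \<Longrightarrow> Y' = Y"
  shows "mu_swap T Y \<in> irreducible_arborescences r"
  unfolding irreducible_arborescences_def
proof (intro CollectI conjI allI impI)
  show "arborescence r (mu_swap T Y)" by (rule Y(2))
  fix X assume X: "X \<subseteq> mu_swap T Y \<inter> Imu" and arb: "arborescence r (mu_swap (mu_swap T Y) X)"
  have X_notin: "x \<notin> mu_inv ` Y" if x: "x \<in> X" for x
  proof
    assume "x \<in> mu_inv ` Y"
    then obtain y where y: "y \<in> Y" "x = mu_inv y" by auto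
    have "y \<in> Imu" "x \<in> Imu" using y(1) Y(1) x X by blast+
    then show False using mu_inv_notin_Imu y(2) by simp
  qed
  have XT: "X \<subseteq> T" and XY: "X \<inter> Y = {}"
    using X X_notin unfolding mu_swap_def by blast+
  have "mu_swap (mu_swap T Y) X = mu_swap T (Y \<union> X)"
    using mu_swap_mu_swap[of Y X T] Y(1) X XY by auto
  then have "Y \<union> X = Y" using maximal[of "Y \<union> X"] arb X XT Y(1) by auto
  then show "X = {}" using XY by auto
qed

definition recovering_choice :: "'e set \<Rightarrow> 'e set \<Rightarrow> 'e \<Rightarrow> 'e" where
  "recovering_choice T Z = (\<lambda>e\<in>Z \<inter> Eneg. out_edge T (s e))"

lemma recovering_choice_in_choices:
  assumes T: "out_function r T" and Y: "Y \<subseteq> T \<inter> Imu"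
  shows "recovering_choice T (mu_swap T Y) \<in> choices (mu_swap T Y)"
  unfolding choices_def
proof (rule PiE_I)
  have inv: "y \<in> T" "y \<in> mu (mu_inv y)" "s (mu_inv y) = s y" if "y \<in> Y" for y
    using mu_inv that Y by auto
  fix e assume e: "e \<in> mu_swap T Y \<inter> Eneg"
  then consider "e \<in> T" | y where "y \<in> Y" "e = mu_inv y" unfolding mu_swap_def by auto
  then show "recovering_choice T (mu_swap T Y) e \<in> insert e (mu e)"
    by cases (use e out_edge_source[OF T] inv in \<open>auto simp: recovering_choice_def\<close>)
qed (auto simp: recovering_choice_def)

lemma expand_recovering_choice:
  assumes T: "out_function r T" and Y: "Y \<subseteq> T \<inter> Imu"
  shows "expand (mu_swap T Y) (recovering_choice T (mu_swap T Y)) = T"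
proof
  let ?Z = "mu_swap T Y"
  let ?c = "recovering_choice T ?Z"
  have out_T: "out_edge T (s y) = y" if "y \<in> T" for y using out_edge_source[OF T that] .
  have inv: "mu_inv y \<in> Eneg" "s (mu_inv y) = s y" if "y \<in> Y" for y
    using mu_inv that Y by auto
  show "T \<subseteq> expand ?Z ?c"
  proof
    fix x assume x: "x \<in> T"
    show "x \<in> expand ?Z ?c"
    proof (cases "x \<in> Y")
      case True
      then have "mu_inv x \<in> ?Z \<inter> Eneg" "?c (mu_inv x) = x"
        using inv out_T x unfolding mu_swap_def recovering_choice_def by auto
      then show ?thesis unfolding expand_def by force
    next
      case False
      then have "x \<in> ?Z" using x unfolding mu_swap_def by simp
      then show ?thesis
        using out_T x unfolding expand_def recovering_choice_def by (cases "x \<in> Eneg") force+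
    qed
  qed
  show "expand ?Z ?c \<subseteq> T"
  proof
    fix x assume "x \<in> expand ?Z ?c"
    then consider "x \<in> ?Z - Eneg" | e where "e \<in> ?Z \<inter> Eneg" "x = ?c e" unfolding expand_def by auto
    then show "x \<in> T"
    proof cases
      case 1
      then show ?thesis using inv unfolding mu_swap_def by auto
    next
      case 2
      have cover_T: "out_cover r T" using T unfolding out_function_def by simp
      have cover_Z: "out_cover r ?Z"
        using mu_swap_out_function[OF T Y] unfolding out_function_def by simp
      have "s e \<in> nodes m" "s e \<noteq> r"
        using 2 source_in_nodes out_cover_subset[OF cover_Z] out_cover_root[OF cover_Z] by auto
      then show ?thesis using out_edge(1)[OF cover_T] 2 unfolding recovering_choice_def by auto
    qed
  qed
qed

lemma arborescence_expand_surj: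
  assumes T: "arborescence r T"
  obtains Z c where "Z \<in> irreducible_arborescences r" "c \<in> choices Z" "T = expand Z c"
proof -
  define FF where "FF = {Y. Y \<subseteq> T \<inter> Imu \<and> arborescence r (mu_swap T Y)}"
  have "finite FF" unfolding FF_def using arborescence_finite[OF T] by (simp add: finite_subset)
  moreover have "{} \<in> FF" unfolding FF_def using T mu_swap_empty by simp
  ultimately obtain Y where Y: "Y \<in> FF" and maximal: "\<And>Y'. Y' \<in> FF \<Longrightarrow> Y \<subseteq> Y' \<Longrightarrow> Y = Y'"
    using finite_has_maximal2 by metis
  have Y': "Y \<subseteq> T \<inter> Imu" "arborescence r (mu_swap T Y)" using Y unfolding FF_def by auto
  have "mu_swap T Y \<in> irreducible_arborescences r"
    by (rule maximal_mu_swap_irreducible[OF T Y']) (use maximal in \<open>auto simp: FF_def\<close>)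
  moreover have "out_function r T" using T unfolding arborescence_def by simp
  note recovering_choice_in_choices[OF this Y'(1)] expand_recovering_choice[OF this Y'(1)]
  ultimately show ?thesis using that by metis
qed

lemma weight_nonneg: "e \<in> E \<Longrightarrow> 0 \<le> weight e"
  unfolding weight_def using lab_add_mu_nonneg Eneg_Epos_cover
  by (auto simp: Eplus_def order.strict_implies_order)

lemma weight_pos_Epos: "e \<in> E \<Longrightarrow> e \<notin> Eneg \<Longrightarrow> 0 < weight e"
  unfolding weight_def using Eneg_Epos_cover by (auto simp: Eplus_def)

lemma Upsilon_eq_sum_weight:
  assumes r: "r \<in> nodes m"
  shows "Upsilon m E s t lab r = (\<Sum>Z\<in>irreducible_arborescences r. prod weight Z)"
proof -
  let ?exp = "\<lambda>(Z, c). expand Z c"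
  let ?S = "Sigma (irreducible_arborescences r) choices"
  have fin: "finite (irreducible_arborescences r)"
    using finite_subset[OF _ finite_arborescences[of r]] irreducible_arborescencesD(1) by blast
  have bij: "bij_betw ?exp ?S {T. arborescence r T}"
  proof (rule bij_betw_imageI)
    show "inj_on ?exp ?S" using expand_inj by (auto simp: inj_on_def)
    show "?exp ` ?S = {T. arborescence r T}"
      using arborescence_expand irreducible_arborescencesD(1) arborescence_expand_surj
      by (auto simp: image_iff) metis
  qed
  have "(\<Sum>T\<in>{T. arborescence r T}. prod lab T) = (\<Sum>p\<in>?S. prod lab (?exp p))"
    by (rule sum.reindex_bij_betw[OF bij, symmetric])
  also have "\<dots> = (\<Sum>(Z, c)\<in>?S. prod lab (expand Z c))"
    by (simp add: case_prod_beta)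
  also have "\<dots> = (\<Sum>Z\<in>irreducible_arborescences r. \<Sum>c\<in>choices Z. prod lab (expand Z c))"
    using fin arborescence_finite irreducible_arborescencesD(1) finite_choices
    by (intro sum.Sigma[symmetric]) blast+
  also have "\<dots> = (\<Sum>Z\<in>irreducible_arborescences r. prod weight Z)"
    using sum_prod_expand irreducible_arborescencesD(1) by (intro sum.cong) auto
  finally show ?thesis using Upsilon_eq_sum_arborescences[OF r, of lab] by simp
qed

lemma prod_weight_nonneg:
  assumes "finite Z" "Z \<noteq> {}" "Z \<subseteq> E"
  shows "0 \<le> prod weight Z"
  using assms weight_nonneg by (intro prod_nonneg_nonempty) auto

lemma prod_weight_pos_iff:
  assumes Z: "finite Z" "Z \<noteq> {}" "Z \<subseteq> E"
  shows "0 < prod weight Z \<longleftrightarrow> (\<forall>e\<in>Z \<inter> Eneg. 0 < lab e + (\<Sum>e'\<in>mu e. lab e'))"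
proof
  assume pos: "0 < prod weight Z"
  show "\<forall>e\<in>Z \<inter> Eneg. 0 < lab e + (\<Sum>e'\<in>mu e. lab e')"
  proof
    fix e assume e: "e \<in> Z \<inter> Eneg"
    have "weight e \<noteq> 0"
    proof
      assume "weight e = 0"
      then have "prod weight Z = 0" using e Z(1) by (intro prod_zero) auto
      then show False using pos by simp
    qed
    moreover have "0 \<le> weight e" using weight_nonneg Z e by auto
    ultimately show "0 < lab e + (\<Sum>e'\<in>mu e. lab e')" using e unfolding weight_def by auto
  qed
next
  assume "\<forall>e\<in>Z \<inter> Eneg. 0 < lab e + (\<Sum>e'\<in>mu e. lab e')"
  then have "0 < weight e" if "e \<in> Z" for e
    using that weight_pos_Epos Z unfolding weight_def by (cases "e \<in> Eneg") auto
  then show "0 < prod weight Z" using Z by (intro prod_pos_nonempty) auto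
qed

lemma Upsilon_nonzero_iff:
  assumes m: "1 \<le> m" and r: "r \<in> nodes m"
  shows "Upsilon m E s t lab r \<noteq> 0 \<longleftrightarrow>
    (\<exists>\<tau>\<in>irreducible_arborescences r. \<forall>e\<in>\<tau> \<inter> Eneg. 0 < lab e + (\<Sum>e'\<in>mu e. lab e'))"
proof -
  have tree: "finite Z" "Z \<noteq> {}" "Z \<subseteq> E" if "Z \<in> irreducible_arborescences r" for Z
    using irreducible_arborescencesD(1)[OF that] arborescence_finite arborescence_nonempty[OF m r]
    unfolding arborescence_def out_function_def out_cover_def by auto
  have "finite (irreducible_arborescences r)"
    using finite_subset[OF _ finite_arborescences[of r]] irreducible_arborescencesD(1) by blast
  then have "(\<Sum>Z\<in>irreducible_arborescences r. prod weight Z) \<noteq> 0 \<longleftrightarrow>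
      (\<exists>Z\<in>irreducible_arborescences r. 0 < prod weight Z)"
    by (rule sum_nonneg_neq_0_iff) (use prod_weight_nonneg tree in auto)
  then show ?thesis using Upsilon_eq_sum_weight[OF r] prod_weight_pos_iff tree by simp
qed

end

theorem proposition3p7:
  fixes m :: nat
    and A :: "'r::{comm_ring_1,ordered_comm_semiring_strict} mat"
    and b :: "'r vec"
    and E :: "'e set" and s t :: "'e \<Rightarrow> nat" and lab :: "'e \<Rightarrow> 'r"
    and mu :: "'e \<Rightarrow> 'e set"
  assumes "m \<ge> 1"
    and "A \<in> carrier_mat m m"
    and "b \<in> carrier_vec m"
    and "multidigraph m E s t"
    and "\<forall>i\<in>nodes m. \<forall>j\<in>nodes m.
           laplacian m E s t lab i j = bordered m A b $$ (i - 1, j - 1)"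
    and "P_graph E s t lab mu"
  shows "(\<forall>i\<in>nodes m. Upsilon m E s t lab i \<noteq> 0 \<longleftrightarrow>
            (\<exists>\<tau>\<in>Lambda m E s t lab mu {i}. \<forall>e\<in>\<tau> \<inter> Eminus E lab.
               0 < lab e + (\<Sum>e'\<in>mu e. lab e')))
       \<and> (det A \<noteq> 0 \<longleftrightarrow>
            (\<exists>\<tau>\<in>Lambda m E s t lab mu {m+1}. \<forall>e\<in>\<tau> \<inter> Eminus E lab.
               0 < lab e + (\<Sum>e'\<in>mu e. lab e')))"
proof -
  interpret finite_P_graph m E s t lab mu
    using assms(4,6) by unfold_locales
  have Upsilon_iff: "Upsilon m E s t lab i \<noteq> 0 \<longleftrightarrow>
      (\<exists>\<tau>\<in>Lambda m E s t lab mu {i}. \<forall>e\<in>\<tau> \<inter> Eminus E lab. 0 < lab e + (\<Sum>e'\<in>mu e. lab e'))"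
    if "i \<in> nodes m" for i
    using Upsilon_nonzero_iff[OF assms(1) that] Lambda_single_eq[OF that] by simp
  have "A $$ (i, j) = laplacian m E s t lab (i + 1) (j + 1)" if "i < m" "j < m" for i j
    using assms(5) that unfolding nodes_def by (force simp: bordered_def)
  then have "det A = (-1) ^ m * Upsilon m E s t lab (m + 1)"
    by (rule det_eq_Upsilon[OF assms(2)])
  then have "det A \<noteq> 0 \<longleftrightarrow> Upsilon m E s t lab (m + 1) \<noteq> 0"
    by (simp add: neg_one_power_mult_eq_0_iff)
  moreover have "m + 1 \<in> nodes m" unfolding nodes_def by simp
  ultimately show ?thesis using Upsilon_iff by blast
qed

end
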